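(* Let $M$ be a graded $R$-module such that the map $\psi^q$ is surjective. Then the following are equivalent: (1) $qp.Spec_g(M)$ with the quasi-Zariski topology is a spectral space. (2) $qp.Spec_g(M)$ with the quasi-Zariski topology is a $T_0$-space. (3) The natural map $\varphi$ is injective. (4) For all $P,Q\in qp.Spec_g(M)$, if $qp\text{-}V_M^g(P)=qp\text{-}V_M^g(Q)$ then $P=Q$. (5) $|qp.Spec_g^p(M)|\le 1$ for every $p\in Spec_g(R)$. (6) $\varphi$ is a homeomorphism from $qp.Spec_g(M)$ (quasi-Zariski topology) onto $Spec_g(\overline R)$ (Zariski topology).
   Context: $R=\bigoplus_{g\in G}R_g$ is a graded commutative ring with identity graded by a group $G$, $h(R)=\bigcup_g R_g$; $M$ is a graded $R$-module, $h(M)$ its homogeneous elements. $Gr(I)$ is the graded radical of a graded ideal $I$. $Spec_g(R)$: graded prime ideals. $(K:_RM)=\{r: rM\subseteq K\}$. Graded prime submodule: proper graded $P$ with $rm\in P$ ($r\in h(R), m\in h(M)$) implying $m\in P$ or $r\in(P:_RM)$. $Gr_M(K)$: intersection of graded prime submodules containing $K$ ($M$ if none). Graded primeful property of $K$: for each graded prime $p\supseteq(K:_RM)$ there is a graded prime submodule $P\supseteq K$ with $(P:_RM)=p$. Graded quasi-primary submodule: proper graded $Q$ with $rm\in Q$ ($r\in h(R),m\in h(M)$) implying $r\in Gr((Q:_RM))$ or $m\in Gr_M(Q)$. $qp.Spec_g(M)$: graded quasi-primary submodules with the graded primeful property; $qp.Spec_g^p(M)=\{Q\in qp.Spec_g(M):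 Gr((Q:_RM))=p\}$. $qp\text{-}V_M^g(K)=\{Q\in qp.Spec_g(M): Gr((Q:_RM))\supseteq Gr((K:_RM))\}$; the quasi-Zariski topology has closed sets exactly these. $\overline R=R/\mathrm{Ann}(M)$; $Spec_g(\overline R)$ carries the Zariski topology (closed sets: sets of graded primes containing a given graded ideal). The natural map is $\varphi(Q)=(Gr_M(Q):_RM)/\mathrm{Ann}(M)$ (where $(Gr_M(Q):_RM)=Gr((Q:_RM))$ is a graded prime ideal). A graded quasi-primary ideal of $\overline R$ is a proper graded ideal $q$ with $ab\in q$ ($a,b$ homogeneous) implying $a\in Gr(q)$ or $b\in Gr(q)$; $qp.Spec_g(\overline R)$ is the set of them; $\psi^q:qp.Spec_g(M)\to qp.Spec_g(\overline R)$, $\psi^q(Q)=(Q:_RM)/\mathrm{Ann}(M)$. A spectral space (Hochster) is a topological space that is $T_0$, quasi-compact, whose quasi-compact open subsets are closed under finite intersection and form an open base, and in which every irreducible closed subset has a generic point (a point whose closure is the whole subset). *)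

theory Defs
  imports "HOL-Algebra.Algebra" "HOL-Analysis.Analysis"
begin

definition gdecomp :: "'g monoid \<Rightarrow> ('b, 'm) ring_scheme \<Rightarrow> ('g \<Rightarrow> 'b set) \<Rightarrow> 'b \<Rightarrow> ('g \<Rightarrow> 'b) \<Rightarrow> bool" where
  "gdecomp G S A x c \<longleftrightarrow>
     c \<in> extensional (carrier G) \<and> (\<forall>g\<in>carrier G. c g \<in> A g) \<and>
     finite {g \<in> carrier G. c g \<noteq> \<zero>\<^bsub>S\<^esub>} \<and>
     x = (\<Oplus>\<^bsub>S\<^esub>g\<in>{g \<in> carrier G. c g \<noteq> \<zero>\<^bsub>S\<^esub>}. c g)"

definition direct_sum_decomp :: "'g monoid \<Rightarrow> ('b, 'm) ring_scheme \<Rightarrow> ('g \<Rightarrow> 'b set) \<Rightarrow> bool" where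
  "direct_sum_decomp G S A \<longleftrightarrow>
     (\<forall>g\<in>carrier G. subgroup (A g) (add_monoid S)) \<and>
     (\<forall>x\<in>carrier S. \<exists>!c. gdecomp G S A x c)"

definition gcomp :: "'g monoid \<Rightarrow> ('b, 'm) ring_scheme \<Rightarrow> ('g \<Rightarrow> 'b set) \<Rightarrow> 'b \<Rightarrow> 'g \<Rightarrow> 'b" where
  "gcomp G S A x g = (THE c. gdecomp G S A x c) g"

definition homog :: "'g monoid \<Rightarrow> ('g \<Rightarrow> 'b set) \<Rightarrow> 'b set" where
  "homog G A = (\<Union>g\<in>carrier G. A g)"

definition graded_ring :: "'g monoid \<Rightarrow> ('a, 'r) ring_scheme \<Rightarrow> ('g \<Rightarrow> 'a set) \<Rightarrow> bool" where
  "graded_ring G R A \<longleftrightarrow> group G \<and> cring R \<and> direct_sum_decomp G R A \<and>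
     (\<forall>g\<in>carrier G. \<forall>h\<in>carrier G. \<forall>a\<in>A g. \<forall>b\<in>A h. a \<otimes>\<^bsub>R\<^esub> b \<in> A (g \<otimes>\<^bsub>G\<^esub> h))"

definition graded_module :: "'g monoid \<Rightarrow> 'a ring \<Rightarrow> ('g \<Rightarrow> 'a set) \<Rightarrow> ('a, 'b) module \<Rightarrow> ('g \<Rightarrow> 'b set) \<Rightarrow> bool" where
  "graded_module G R A M B \<longleftrightarrow> graded_ring G R A \<and> Module.module R M \<and> direct_sum_decomp G M B \<and>
     (\<forall>g\<in>carrier G. \<forall>h\<in>carrier G. \<forall>a\<in>A g. \<forall>m\<in>B h. a \<odot>\<^bsub>M\<^esub> m \<in> B (g \<otimes>\<^bsub>G\<^esub> h))"

definition graded_ideal :: "'g monoid \<Rightarrow> ('a, 'r) ring_scheme \<Rightarrow> ('g \<Rightarrow> 'a set) \<Rightarrow> 'a set \<Rightarrow> bool" where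
  "graded_ideal G R A I \<longleftrightarrow> ideal I R \<and> (\<forall>x\<in>I. \<forall>g\<in>carrier G. gcomp G R A x g \<in> I)"

definition gr_radical :: "'g monoid \<Rightarrow> ('a, 'r) ring_scheme \<Rightarrow> ('g \<Rightarrow> 'a set) \<Rightarrow> 'a set \<Rightarrow> 'a set" where
  "gr_radical G R A I = {x \<in> carrier R. \<forall>g\<in>carrier G. \<exists>n::nat. (gcomp G R A x g) [^]\<^bsub>R\<^esub> n \<in> I}"

definition graded_prime_ideal :: "'g monoid \<Rightarrow> ('a, 'r) ring_scheme \<Rightarrow> ('g \<Rightarrow> 'a set) \<Rightarrow> 'a set \<Rightarrow> bool" where
  "graded_prime_ideal G R A P \<longleftrightarrow> graded_ideal G R A P \<and> P \<noteq> carrier R \<and>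
     (\<forall>a\<in>homog G A. \<forall>b\<in>homog G A. a \<otimes>\<^bsub>R\<^esub> b \<in> P \<longrightarrow> a \<in> P \<or> b \<in> P)"

definition Spec_g :: "'g monoid \<Rightarrow> ('a, 'r) ring_scheme \<Rightarrow> ('g \<Rightarrow> 'a set) \<Rightarrow> 'a set set" where
  "Spec_g G R A = {P. graded_prime_ideal G R A P}"

definition graded_qp_ideal :: "'g monoid \<Rightarrow> ('a, 'r) ring_scheme \<Rightarrow> ('g \<Rightarrow> 'a set) \<Rightarrow> 'a set \<Rightarrow> bool" where
  "graded_qp_ideal G R A q \<longleftrightarrow> graded_ideal G R A q \<and> q \<noteq> carrier R \<and>
     (\<forall>a\<in>homog G A. \<forall>b\<in>homog G A. a \<otimes>\<^bsub>R\<^esub> b \<in> q \<longrightarrow>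
        a \<in> gr_radical G R A q \<or> b \<in> gr_radical G R A q)"

definition qpSpec_ring :: "'g monoid \<Rightarrow> ('a, 'r) ring_scheme \<Rightarrow> ('g \<Rightarrow> 'a set) \<Rightarrow> 'a set set" where
  "qpSpec_ring G R A = {q. graded_qp_ideal G R A q}"

definition zariski_g :: "'g monoid \<Rightarrow> ('a, 'r) ring_scheme \<Rightarrow> ('g \<Rightarrow> 'a set) \<Rightarrow> 'a set topology" where
  "zariski_g G R A = topology (\<lambda>U. \<exists>I. graded_ideal G R A I \<and>
      U = Spec_g G R A - {p \<in> Spec_g G R A. I \<subseteq> p})"

definition colon :: "'a ring \<Rightarrow> ('a, 'b) module \<Rightarrow> 'b set \<Rightarrow> 'a set" where
  "colon R M K = {r \<in> carrier R. \<forall>m\<in>carrier M. r \<odot>\<^bsub>M\<^esub> m \<in> K}"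

definition ann :: "'a ring \<Rightarrow> ('a, 'b) module \<Rightarrow> 'a set" where
  "ann R M = colon R M {\<zero>\<^bsub>M\<^esub>}"

definition graded_submodule :: "'g monoid \<Rightarrow> 'a ring \<Rightarrow> ('a, 'b) module \<Rightarrow> ('g \<Rightarrow> 'b set) \<Rightarrow> 'b set \<Rightarrow> bool" where
  "graded_submodule G R M B K \<longleftrightarrow> submodule K R M \<and> (\<forall>x\<in>K. \<forall>g\<in>carrier G. gcomp G M B x g \<in> K)"

definition graded_prime_submodule :: "'g monoid \<Rightarrow> 'a ring \<Rightarrow> ('g \<Rightarrow> 'a set) \<Rightarrow> ('a, 'b) module \<Rightarrow> ('g \<Rightarrow> 'b set) \<Rightarrow> 'b set \<Rightarrow> bool" where
  "graded_prime_submodule G R A M B P \<longleftrightarrow> graded_submodule G R M B P \<and> P \<noteq> carrier M \<and>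
     (\<forall>r\<in>homog G A. \<forall>m\<in>homog G B. r \<odot>\<^bsub>M\<^esub> m \<in> P \<longrightarrow> m \<in> P \<or> r \<in> colon R M P)"

text \<open>Gr_M(K): intersection of graded prime submodules containing K (M if there are none).\<close>
definition GrM :: "'g monoid \<Rightarrow> 'a ring \<Rightarrow> ('g \<Rightarrow> 'a set) \<Rightarrow> ('a, 'b) module \<Rightarrow> ('g \<Rightarrow> 'b set) \<Rightarrow> 'b set \<Rightarrow> 'b set" where
  "GrM G R A M B K = carrier M \<inter> \<Inter>{P. graded_prime_submodule G R A M B P \<and> K \<subseteq> P}"

definition graded_primeful :: "'g monoid \<Rightarrow> 'a ring \<Rightarrow> ('g \<Rightarrow> 'a set) \<Rightarrow> ('a, 'b) module \<Rightarrow> ('g \<Rightarrow> 'b set) \<Rightarrow> 'b set \<Rightarrow> bool" where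
  "graded_primeful G R A M B K \<longleftrightarrow>
     (\<forall>p. graded_prime_ideal G R A p \<and> colon R M K \<subseteq> p \<longrightarrow>
        (\<exists>P. graded_prime_submodule G R A M B P \<and> K \<subseteq> P \<and> colon R M P = p))"

definition graded_qp_submodule :: "'g monoid \<Rightarrow> 'a ring \<Rightarrow> ('g \<Rightarrow> 'a set) \<Rightarrow> ('a, 'b) module \<Rightarrow> ('g \<Rightarrow> 'b set) \<Rightarrow> 'b set \<Rightarrow> bool" where
  "graded_qp_submodule G R A M B Q \<longleftrightarrow> graded_submodule G R M B Q \<and> Q \<noteq> carrier M \<and>
     (\<forall>r\<in>homog G A. \<forall>m\<in>homog G B. r \<odot>\<^bsub>M\<^esub> m \<in> Q \<longrightarrow>
        r \<in> gr_radical G R A (colon R M Q) \<or> m \<in> GrM G R A M B Q)"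

definition qpSpec :: "'g monoid \<Rightarrow> 'a ring \<Rightarrow> ('g \<Rightarrow> 'a set) \<Rightarrow> ('a, 'b) module \<Rightarrow> ('g \<Rightarrow> 'b set) \<Rightarrow> 'b set set" where
  "qpSpec G R A M B = {Q. graded_qp_submodule G R A M B Q \<and> graded_primeful G R A M B Q}"

definition qpSpec_at :: "'g monoid \<Rightarrow> 'a ring \<Rightarrow> ('g \<Rightarrow> 'a set) \<Rightarrow> ('a, 'b) module \<Rightarrow> ('g \<Rightarrow> 'b set) \<Rightarrow> 'a set \<Rightarrow> 'b set set" where
  "qpSpec_at G R A M B p = {Q \<in> qpSpec G R A M B. gr_radical G R A (colon R M Q) = p}"

definition qpV :: "'g monoid \<Rightarrow> 'a ring \<Rightarrow> ('g \<Rightarrow> 'a set) \<Rightarrow> ('a, 'b) module \<Rightarrow> ('g \<Rightarrow> 'b set) \<Rightarrow> 'b set \<Rightarrow> 'b set set" where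
  "qpV G R A M B K = {Q \<in> qpSpec G R A M B.
      gr_radical G R A (colon R M K) \<subseteq> gr_radical G R A (colon R M Q)}"

definition quasi_zariski :: "'g monoid \<Rightarrow> 'a ring \<Rightarrow> ('g \<Rightarrow> 'a set) \<Rightarrow> ('a, 'b) module \<Rightarrow> ('g \<Rightarrow> 'b set) \<Rightarrow> 'b set topology" where
  "quasi_zariski G R A M B = topology (\<lambda>U. \<exists>K. graded_submodule G R M B K \<and>
      U = qpSpec G R A M B - qpV G R A M B K)"

definition Rbar :: "'a ring \<Rightarrow> ('a, 'b) module \<Rightarrow> 'a set ring" where
  "Rbar R M = R Quot (ann R M)"

definition Abar :: "'a ring \<Rightarrow> ('a, 'b) module \<Rightarrow> ('g \<Rightarrow> 'a set) \<Rightarrow> 'g \<Rightarrow> 'a set set" where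
  "Abar R M A g = (\<lambda>x. a_r_coset R (ann R M) x) ` A g"

definition phi_map :: "'g monoid \<Rightarrow> 'a ring \<Rightarrow> ('g \<Rightarrow> 'a set) \<Rightarrow> ('a, 'b) module \<Rightarrow> ('g \<Rightarrow> 'b set) \<Rightarrow> 'b set \<Rightarrow> 'a set set" where
  "phi_map G R A M B Q = (\<lambda>x. a_r_coset R (ann R M) x) ` colon R M (GrM G R A M B Q)"

definition psi_q :: "'a ring \<Rightarrow> ('a, 'b) module \<Rightarrow> 'b set \<Rightarrow> 'a set set" where
  "psi_q R M Q = (\<lambda>x. a_r_coset R (ann R M) x) ` colon R M Q"

definition irreducible_in :: "'a topology \<Rightarrow> 'a set \<Rightarrow> bool" where
  "irreducible_in T S \<longleftrightarrow> S \<subseteq> topspace T \<and> S \<noteq> {} \<and>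
     (\<forall>C1 C2. closedin T C1 \<and> closedin T C2 \<and> S \<subseteq> C1 \<union> C2 \<longrightarrow> S \<subseteq> C1 \<or> S \<subseteq> C2)"

definition spectral_space :: "'a topology \<Rightarrow> bool" where
  "spectral_space T \<longleftrightarrow>
     t0_space T \<and> compact_space T \<and>
     (\<forall>U V. openin T U \<and> compactin T U \<and> openin T V \<and> compactin T V \<longrightarrow> compactin T (U \<inter> V)) \<and>
     (\<forall>W x. openin T W \<and> x \<in> W \<longrightarrow> (\<exists>U. openin T U \<and> compactin T U \<and> x \<in> U \<and> U \<subseteq> W)) \<and>
     (\<forall>S. closedin T S \<and> irreducible_in T S \<longrightarrow> (\<exists>x\<in>S. T closure_of {x} = S))"

end

theory Submission
  imports Defs
begin

(* For Q in qp.Spec_g(M) the ideal Gr((Q :_R M)) is a graded prime containing Ann(M), and the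
   surjectivity of psi^q makes Q |-> Gr((Q :_R M)) map qp.Spec_g(M) onto V(Ann(M)), that is,
   phi maps it onto Spec_g(R/Ann(M)). By the primeful property the quasi-Zariski closed sets are
   exactly the preimages of Zariski closed sets: qp.Spec_g(M) carries the topology pulled back
   along phi. Spec_g of a graded ring is spectral (the basic opens D(a), a homogeneous, are
   quasi-compact and stable under intersection, and an irreducible closed set has the
   intersection of its members as generic point). A topology pulled back along a surjection onto
   a T0 space is T0 iff the map is injective, and then the map is a homeomorphism, which
   transports spectrality. Conditions (4) and (5) only restate that Q |-> Gr((Q :_R M)), or
   equivalently phi, is injective. *)

section \<open>Graded abelian groups and graded rings\<close>

locale additive_grading =
  fixes G :: "'g monoid" and S :: "('b, 'm) ring_scheme" (structure) and A :: "'g \<Rightarrow> 'b set"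
  assumes abelian_group: "abelian_group S"
    and component_subgroup: "g \<in> carrier G \<Longrightarrow> subgroup (A g) (add_monoid S)"
begin

sublocale abelian_group S by (rule abelian_group)

lemma component_subset: "g \<in> carrier G \<Longrightarrow> A g \<subseteq> carrier S"
  using component_subgroup subgroup.subset by fastforce

lemma zero_in_component: "g \<in> carrier G \<Longrightarrow> \<zero> \<in> A g"
  using component_subgroup subgroup.one_closed by fastforce

lemma component_add_closed: "g \<in> carrier G \<Longrightarrow> a \<in> A g \<Longrightarrow> b \<in> A g \<Longrightarrow> a \<oplus> b \<in> A g"
  using component_subgroup subgroup.m_closed by fastforce

lemma gdecomp_imp_carrier: "gdecomp G S A x c \<Longrightarrow> x \<in> carrier S"
proof -
  assume d: "gdecomp G S A x c"
  then have "c \<in> {g \<in> carrier G. c g \<noteq> \<zero>} \<rightarrow> carrier S"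
    using component_subset unfolding gdecomp_def by blast
  then show ?thesis using d unfolding gdecomp_def by (metis finsum_closed)
qed

lemma gdecompI:
  assumes "c \<in> extensional (carrier G)" "\<And>g. g \<in> carrier G \<Longrightarrow> c g \<in> A g"
    "finite F" "F \<subseteq> carrier G" "\<And>g. g \<in> carrier G \<Longrightarrow> g \<notin> F \<Longrightarrow> c g = \<zero>"
    "x = (\<Oplus>g\<in>F. c g)"
  shows "gdecomp G S A x c"
proof -
  let ?supp = "{g \<in> carrier G. c g \<noteq> \<zero>}"
  have sub: "?supp \<subseteq> F" using assms(5) by blast
  have "(\<Oplus>g\<in>F. c g) = (\<Oplus>g\<in>?supp. c g)"
    apply (rule add.finprod_mono_neutral_cong_right)
    using assms component_subset sub by (auto simp: Pi_def) blast
  then show ?thesis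
    unfolding gdecomp_def using assms sub finite_subset by auto
qed

lemma finsum_closed_in_subset:
  assumes "finite F" "\<zero> \<in> Y" "\<And>a b. a \<in> Y \<Longrightarrow> b \<in> Y \<Longrightarrow> a \<oplus> b \<in> Y" "Y \<subseteq> carrier S"
    "\<And>i. i \<in> F \<Longrightarrow> f i \<in> Y"
  shows "(\<Oplus>i\<in>F. f i) \<in> Y"
  using assms(1,5)
proof (induct F rule: finite_induct)
  case (insert i F)
  then have "f \<in> F \<rightarrow> carrier S" "f i \<in> carrier S" using assms(4) by auto
  then show ?case using insert assms by simp
qed (use assms in simp)

end

locale graded_abelian_group = additive_grading +
  assumes direct_sum: "direct_sum_decomp G S A"
begin

lemma ex1_gdecomp: "x \<in> carrier S \<Longrightarrow> \<exists>!c. gdecomp G S A x c"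
  using direct_sum unfolding direct_sum_decomp_def by auto

lemma gcomp_eq_The: "gcomp G S A x = (THE c. gdecomp G S A x c)"
  by (rule ext) (simp add: gcomp_def)

lemma gdecomp_gcomp: "x \<in> carrier S \<Longrightarrow> gdecomp G S A x (gcomp G S A x)"
  unfolding gcomp_eq_The using ex1_gdecomp theI' by metis

lemma gcomp_eqI: "gdecomp G S A x c \<Longrightarrow> gcomp G S A x = c"
  unfolding gcomp_eq_The using ex1_gdecomp gdecomp_imp_carrier the1_equality by metis

lemma gcomp_in_component: "x \<in> carrier S \<Longrightarrow> g \<in> carrier G \<Longrightarrow> gcomp G S A x g \<in> A g"
  using gdecomp_gcomp unfolding gdecomp_def by blast

lemma gcomp_closed: "x \<in> carrier S \<Longrightarrow> g \<in> carrier G \<Longrightarrow> gcomp G S A x g \<in> carrier S"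
  using gcomp_in_component component_subset by blast

lemma finite_gcomp_support: "x \<in> carrier S \<Longrightarrow> finite {g \<in> carrier G. gcomp G S A x g \<noteq> \<zero>}"
  using gdecomp_gcomp unfolding gdecomp_def by blast

lemma finsum_gcomp:
  "x \<in> carrier S \<Longrightarrow> x = (\<Oplus>g\<in>{g \<in> carrier G. gcomp G S A x g \<noteq> \<zero>}. gcomp G S A x g)"
  using gdecomp_gcomp unfolding gdecomp_def by blast

lemma finsum_gcomp_superset:
  assumes "x \<in> carrier S" "finite F" "F \<subseteq> carrier G"
    "{g \<in> carrier G. gcomp G S A x g \<noteq> \<zero>} \<subseteq> F"
  shows "x = (\<Oplus>g\<in>F. gcomp G S A x g)"
  apply (subst finsum_gcomp[OF assms(1)])
  apply (rule add.finprod_mono_neutral_cong_left)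
  using assms gcomp_closed by auto

lemma gcomp_of_component:
  assumes "h \<in> carrier G" "a \<in> A h" "g \<in> carrier G"
  shows "gcomp G S A a g = (if g = h then a else \<zero>)"
proof -
  have "gdecomp G S A a (restrict (\<lambda>g. if g = h then a else \<zero>) (carrier G))"
    apply (rule gdecompI[where F = "{h}"])
    using assms zero_in_component component_subset apply auto[5]
    apply (subst finsum_insert) using assms component_subset by (auto intro!: r_zero[symmetric])
  then show ?thesis using gcomp_eqI assms by auto
qed

lemma gcomp_zero: "g \<in> carrier G \<Longrightarrow> gcomp G S A \<zero> g = \<zero>"
proof -
  assume g: "g \<in> carrier G"
  have "gdecomp G S A \<zero> (restrict (\<lambda>g. \<zero>) (carrier G))"
    by (rule gdecompI[where F = "{}"]) (use zero_in_component in auto)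
  then show ?thesis using gcomp_eqI g by auto
qed

lemma gcomp_add:
  assumes x: "x \<in> carrier S" and y: "y \<in> carrier S" and g: "g \<in> carrier G"
  shows "gcomp G S A (x \<oplus> y) g = gcomp G S A x g \<oplus> gcomp G S A y g"
proof -
  let ?F = "{g \<in> carrier G. gcomp G S A x g \<noteq> \<zero>} \<union> {g \<in> carrier G. gcomp G S A y g \<noteq> \<zero>}"
  let ?c = "restrict (\<lambda>g. gcomp G S A x g \<oplus> gcomp G S A y g) (carrier G)"
  have fin: "finite ?F" using finite_gcomp_support x y by auto
  have "x \<oplus> y = (\<Oplus>g\<in>?F. gcomp G S A x g) \<oplus> (\<Oplus>g\<in>?F. gcomp G S A y g)"
    using finsum_gcomp_superset[OF x fin] finsum_gcomp_superset[OF y fin] by auto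
  also have "\<dots> = (\<Oplus>g\<in>?F. gcomp G S A x g \<oplus> gcomp G S A y g)"
    by (rule finsum_addf[symmetric]) (use gcomp_closed x y in auto)
  also have "\<dots> = (\<Oplus>g\<in>?F. ?c g)"
    by (rule finsum_cong') (use gcomp_closed x y in auto)
  finally have "gdecomp G S A (x \<oplus> y) ?c"
    by (intro gdecompI[where F = ?F] fin)
      (use component_add_closed gcomp_in_component x y in auto)
  then show ?thesis using g gcomp_eqI by auto
qed

lemma mem_if_gcomps_mem:
  assumes "x \<in> carrier S" "\<zero> \<in> Y" "\<And>a b. a \<in> Y \<Longrightarrow> b \<in> Y \<Longrightarrow> a \<oplus> b \<in> Y" "Y \<subseteq> carrier S"
    "\<And>g. g \<in> carrier G \<Longrightarrow> gcomp G S A x g \<in> Y"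
  shows "x \<in> Y"
  using assms finite_gcomp_support
  by (subst finsum_gcomp[OF assms(1)]) (auto intro!: finsum_closed_in_subset)

end

lemma graded_abelian_groupI:
  assumes "abelian_group S" "direct_sum_decomp G S A"
  shows "graded_abelian_group G S A"
  using assms
  by (intro graded_abelian_group.intro additive_grading.intro graded_abelian_group_axioms.intro)
    (auto simp: direct_sum_decomp_def)

locale graded_cring =
  fixes G :: "'g monoid" and R :: "('a, 'r) ring_scheme" (structure) and A :: "'g \<Rightarrow> 'a set"
  assumes graded_ring: "graded_ring G R A"
begin

sublocale cring R using graded_ring unfolding graded_ring_def by auto
sublocale G: group G using graded_ring unfolding graded_ring_def by auto

lemma graded_abelian_group: "graded_abelian_group G R A"
  using graded_ring unfolding graded_ring_def
  by (auto intro!: graded_abelian_groupI abelian_group_axioms)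

sublocale graded_abelian_group G R A by (rule graded_abelian_group)

lemma mult_component:
  "g \<in> carrier G \<Longrightarrow> h \<in> carrier G \<Longrightarrow> a \<in> A g \<Longrightarrow> b \<in> A h \<Longrightarrow> a \<otimes> b \<in> A (g \<otimes>\<^bsub>G\<^esub> h)"
  using graded_ring unfolding graded_ring_def by blast

lemma homogI: "g \<in> carrier G \<Longrightarrow> a \<in> A g \<Longrightarrow> a \<in> homog G A"
  unfolding homog_def by blast

lemma homogE: "a \<in> homog G A \<Longrightarrow> (\<And>g. g \<in> carrier G \<Longrightarrow> a \<in> A g \<Longrightarrow> P) \<Longrightarrow> P"
  unfolding homog_def by blast

lemma homog_closed: "a \<in> homog G A \<Longrightarrow> a \<in> carrier R"
  using component_subset by (blast elim: homogE)

lemma homog_mult: "a \<in> homog G A \<Longrightarrow> b \<in> homog G A \<Longrightarrow> a \<otimes> b \<in> homog G A"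
  by (metis homogE homogI mult_component G.m_closed)

lemma gcomp_in_homog: "x \<in> carrier R \<Longrightarrow> g \<in> carrier G \<Longrightarrow> gcomp G R A x g \<in> homog G A"
  using homogI gcomp_in_component by blast

lemma gcomp_degree_shift:
  fixes S :: "('b, 'm) ring_scheme" and B :: "'g \<Rightarrow> 'b set" and f :: "'a \<Rightarrow> 'b"
  assumes S: "graded_abelian_group G S B" and h: "h \<in> carrier G"
    and f_finsum: "\<And>(F :: 'g set) c. finite F \<Longrightarrow> c \<in> F \<rightarrow> carrier R \<Longrightarrow>
      f (\<Oplus>i\<in>F. c i) = (\<Oplus>\<^bsub>S\<^esub>i\<in>F. f (c i))"
    and f_shift: "\<And>g a. g \<in> carrier G \<Longrightarrow> a \<in> A g \<Longrightarrow> f a \<in> B (g \<otimes>\<^bsub>G\<^esub> h)"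
    and x: "x \<in> carrier R" and g: "g \<in> carrier G"
  shows "gcomp G S B (f x) (g \<otimes>\<^bsub>G\<^esub> h) = f (gcomp G R A x g)"
proof -
  interpret S: graded_abelian_group G S B by (rule S)
  let ?supp = "{g \<in> carrier G. gcomp G R A x g \<noteq> \<zero>}"
  let ?c = "restrict (\<lambda>k. f (gcomp G R A x (k \<otimes>\<^bsub>G\<^esub> inv\<^bsub>G\<^esub> h))) (carrier G)"
  let ?F = "(\<lambda>k. k \<otimes>\<^bsub>G\<^esub> h) ` ?supp"
  have kh: "\<And>k. k \<in> carrier G \<Longrightarrow> (k \<otimes>\<^bsub>G\<^esub> inv\<^bsub>G\<^esub> h) \<otimes>\<^bsub>G\<^esub> h = k"
    and hk: "\<And>k. k \<in> carrier G \<Longrightarrow> (k \<otimes>\<^bsub>G\<^esub> h) \<otimes>\<^bsub>G\<^esub> inv\<^bsub>G\<^esub> h = k"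
    using h by (simp_all add: G.m_assoc)
  have fin: "finite ?supp" using finite_gcomp_support x by blast
  have f_zero: "f \<zero> = \<zero>\<^bsub>S\<^esub>" using f_finsum[of "{}"] by simp
  have f_closed: "f (gcomp G R A x k) \<in> carrier S" if "k \<in> carrier G" for k
    using S.component_subset f_shift gcomp_in_component h that x by blast
  have "f x = f (\<Oplus>g\<in>?supp. gcomp G R A x g)" using finsum_gcomp x by simp
  also have "\<dots> = (\<Oplus>\<^bsub>S\<^esub>g\<in>?supp. f (gcomp G R A x g))"
    by (rule f_finsum[OF fin]) (use gcomp_closed x in blast)
  also have "\<dots> = (\<Oplus>\<^bsub>S\<^esub>g\<in>?supp. ?c (g \<otimes>\<^bsub>G\<^esub> h))"
    by (rule S.finsum_cong') (use h hk f_closed in auto)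
  also have "\<dots> = (\<Oplus>\<^bsub>S\<^esub>k\<in>?F. ?c k)"
  proof (rule S.finsum_reindex[symmetric])
    show "?c \<in> ?F \<rightarrow> carrier S" using h f_closed by auto
    show "inj_on (\<lambda>k. k \<otimes>\<^bsub>G\<^esub> h) ?supp" using h by (auto intro: inj_onI)
  qed
  finally have "gdecomp G S B (f x) ?c"
  proof (intro S.gdecompI[where F = ?F])
    fix k assume k: "k \<in> carrier G"
    then show "?c k \<in> B k"
      using f_shift[of "k \<otimes>\<^bsub>G\<^esub> inv\<^bsub>G\<^esub> h"] gcomp_in_component x h kh by simp
    assume "k \<notin> ?F"
    then have "k \<otimes>\<^bsub>G\<^esub> inv\<^bsub>G\<^esub> h \<notin> ?supp" using k kh by force
    then show "?c k = \<zero>\<^bsub>S\<^esub>" using k h f_zero by simp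
  qed (use fin h in auto)
  then show ?thesis using S.gcomp_eqI g h hk by simp
qed

lemma gcomp_mult_component:
  assumes "x \<in> carrier R" "h \<in> carrier G" "y \<in> A h" "g \<in> carrier G"
  shows "gcomp G R A (x \<otimes> y) (g \<otimes>\<^bsub>G\<^esub> h) = gcomp G R A x g \<otimes> y"
proof (rule gcomp_degree_shift[OF graded_abelian_group, where f = "\<lambda>x. x \<otimes> y"])
  have "y \<in> carrier R" using assms component_subset by blast
  then show "\<And>(F :: 'g set) c. finite F \<Longrightarrow> c \<in> F \<rightarrow> carrier R \<Longrightarrow>
      (\<Oplus>i\<in>F. c i) \<otimes> y = (\<Oplus>i\<in>F. c i \<otimes> y)"
    by (simp add: finsum_ldistr)
qed (use assms mult_component in auto)

text \<open>For \<open>g \<noteq> \<one>\<close> the \<open>g\<close>-component of \<open>\<one>\<close> kills every homogeneous element, by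
  comparing degrees in \<open>\<one> \<otimes> y = y\<close>, hence kills \<open>\<one>\<close> itself.\<close>

lemma one_in_neutral_component: "\<one> \<in> A \<one>\<^bsub>G\<^esub>"
proof (rule mem_if_gcomps_mem)
  let ?u = "gcomp G R A \<one>"
  have kill: "?u g \<otimes> y = \<zero>" if g: "g \<in> carrier G" "g \<noteq> \<one>\<^bsub>G\<^esub>" and y: "y \<in> homog G A" for g y
  proof -
    obtain h where h: "h \<in> carrier G" "y \<in> A h" using y by (rule homogE)
    have "g \<otimes>\<^bsub>G\<^esub> h \<noteq> h" using g h by (metis G.r_cancel_one')
    then have "gcomp G R A y (g \<otimes>\<^bsub>G\<^esub> h) = \<zero>" using gcomp_of_component h g by simp
    moreover have "gcomp G R A (\<one> \<otimes> y) (g \<otimes>\<^bsub>G\<^esub> h) = ?u g \<otimes> y"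
      using gcomp_mult_component h g by simp
    ultimately show ?thesis using h homog_closed y by simp
  qed
  have "?u g = \<zero>" if g: "g \<in> carrier G" "g \<noteq> \<one>\<^bsub>G\<^esub>" for g
  proof -
    let ?supp = "{k \<in> carrier G. ?u k \<noteq> \<zero>}"
    have "?u g = ?u g \<otimes> (\<Oplus>k\<in>?supp. ?u k)" using finsum_gcomp[of \<one>] g gcomp_closed by simp
    also have "\<dots> = (\<Oplus>k\<in>?supp. ?u g \<otimes> ?u k)"
      by (rule finsum_rdistr) (use finite_gcomp_support g gcomp_closed in auto)
    also have "\<dots> = (\<Oplus>k\<in>?supp. \<zero>)"
      by (rule finsum_cong') (use kill[OF g] gcomp_in_homog in auto)
    finally show ?thesis by simp
  qed
  then show "\<And>g. g \<in> carrier G \<Longrightarrow> ?u g \<in> A \<one>\<^bsub>G\<^esub>"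
    using gcomp_in_component zero_in_component by (metis G.one_closed one_closed)
qed (use component_add_closed zero_in_component component_subset in auto)

lemma homog_one: "\<one> \<in> homog G A"
  using homogI one_in_neutral_component by blast

lemma homog_pow: "a \<in> homog G A \<Longrightarrow> a [^] (n::nat) \<in> homog G A"
  by (induct n) (auto simp: homog_one homog_mult)


section \<open>Graded ideals, graded primes and the graded radical\<close>

lemma ideal_closedI:
  assumes "I \<subseteq> carrier R" "\<zero> \<in> I" "\<And>a b. a \<in> I \<Longrightarrow> b \<in> I \<Longrightarrow> a \<oplus> b \<in> I"
    "\<And>a. a \<in> I \<Longrightarrow> \<ominus> a \<in> I" "\<And>a x. a \<in> I \<Longrightarrow> x \<in> carrier R \<Longrightarrow> x \<otimes> a \<in> I"
  shows "ideal I R"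
proof (rule idealI)
  show "subgroup I (add_monoid R)"
    apply (rule add.subgroupI)
    using assms(1) apply simp
    using assms(2) apply auto[1]
    using assms(4) apply (simp add: a_inv_def[symmetric])
    using assms(3) by simp
  show "\<And>a x. a \<in> I \<Longrightarrow> x \<in> carrier R \<Longrightarrow> a \<otimes> x \<in> I"
    using assms(1,5) m_comm by (metis subsetD)
qed (use assms(5) ring_axioms in auto)

lemma graded_ideal_imp_ideal: "graded_ideal G R A I \<Longrightarrow> ideal I R"
  unfolding graded_ideal_def by blast

lemma graded_ideal_gcomp:
  "graded_ideal G R A I \<Longrightarrow> x \<in> I \<Longrightarrow> g \<in> carrier G \<Longrightarrow> gcomp G R A x g \<in> I"
  unfolding graded_ideal_def by blast

lemma graded_ideal_subset: "graded_ideal G R A I \<Longrightarrow> I \<subseteq> carrier R"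
  by (auto dest: graded_ideal_imp_ideal ideal.Icarr)

lemma ideal_mem_if_gcomps_mem:
  assumes "ideal I R" "x \<in> carrier R" "\<And>g. g \<in> carrier G \<Longrightarrow> gcomp G R A x g \<in> I"
  shows "x \<in> I"
proof -
  interpret I: ideal I R by (rule assms(1))
  show ?thesis
    by (rule mem_if_gcomps_mem[OF assms(2) I.zero_closed I.a_closed I.a_subset assms(3)])
qed

lemma graded_ideal_carrier: "graded_ideal G R A (carrier R)"
  by (simp add: graded_ideal_def oneideal gcomp_closed)

lemma graded_ideal_Inter:
  assumes "C \<noteq> {}" "\<And>I. I \<in> C \<Longrightarrow> graded_ideal G R A I"
  shows "graded_ideal G R A (\<Inter>C)"
proof -
  have "ideal (\<Inter>C) R" by (rule i_Intersect) (use assms graded_ideal_imp_ideal in auto)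
  then show ?thesis using assms(2) graded_ideal_gcomp unfolding graded_ideal_def by auto
qed

lemma graded_ideal_Union_directed:
  assumes ne: "C \<noteq> {}" and graded: "\<And>I. I \<in> C \<Longrightarrow> graded_ideal G R A I"
    and directed: "\<And>I J. I \<in> C \<Longrightarrow> J \<in> C \<Longrightarrow> \<exists>K\<in>C. I \<subseteq> K \<and> J \<subseteq> K"
  shows "graded_ideal G R A (\<Union>C)"
proof -
  have id: "\<And>I. I \<in> C \<Longrightarrow> ideal I R" using graded graded_ideal_imp_ideal by blast
  have "ideal (\<Union>C) R"
  proof (rule ideal_closedI)
    show "\<Union>C \<subseteq> carrier R" using graded graded_ideal_subset by blast
    obtain I where "I \<in> C" using ne by blast
    then show "\<zero> \<in> \<Union>C" using id[of I] by (auto dest: ideal.axioms(1) additive_subgroup.zero_closed)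
  next
    fix a b assume "a \<in> \<Union>C" "b \<in> \<Union>C"
    then obtain I J where "I \<in> C" "J \<in> C" "a \<in> I" "b \<in> J" by blast
    then obtain K where K: "K \<in> C" "a \<in> K" "b \<in> K" using directed by blast
    then have "a \<oplus> b \<in> K" using id[OF K(1)] by (auto dest: ideal.axioms(1) intro: additive_subgroup.a_closed)
    then show "a \<oplus> b \<in> \<Union>C" using K by blast
  next
    fix a assume "a \<in> \<Union>C"
    then obtain I where I: "I \<in> C" "a \<in> I" by blast
    then have "\<ominus> a \<in> I" using id[OF I(1)] by (auto dest: ideal.axioms(1) intro: additive_subgroup.a_inv_closed)
    then show "\<ominus> a \<in> \<Union>C" using I by blast
  next
    fix a x assume "a \<in> \<Union>C" "x \<in> carrier R"
    then obtain I where I: "I \<in> C" "a \<in> I" by blast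
    then have "x \<otimes> a \<in> I" using id[OF I(1)] \<open>x \<in> carrier R\<close> by (auto intro: ideal.I_l_closed)
    then show "x \<otimes> a \<in> \<Union>C" using I by blast
  qed
  moreover have "gcomp G R A x g \<in> \<Union>C" if "x \<in> \<Union>C" "g \<in> carrier G" for x g
    using that graded graded_ideal_gcomp by blast
  ultimately show ?thesis unfolding graded_ideal_def by blast
qed

lemma graded_ideal_quotient_homog:
  assumes I: "graded_ideal G R A I" and x: "x \<in> homog G A"
  shows "graded_ideal G R A {r \<in> carrier R. r \<otimes> x \<in> I}"
proof -
  interpret I: ideal I R using I graded_ideal_imp_ideal by blast
  have xc: "x \<in> carrier R" using x homog_closed by auto
  have "ideal {r \<in> carrier R. r \<otimes> x \<in> I} R"
  proof (rule ideal_closedI)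
    fix a b assume "a \<in> {r \<in> carrier R. r \<otimes> x \<in> I}" "b \<in> {r \<in> carrier R. r \<otimes> x \<in> I}"
    then show "a \<oplus> b \<in> {r \<in> carrier R. r \<otimes> x \<in> I}" using xc l_distr I.a_closed by auto
  next
    fix a assume "a \<in> {r \<in> carrier R. r \<otimes> x \<in> I}"
    then show "\<ominus> a \<in> {r \<in> carrier R. r \<otimes> x \<in> I}" using xc l_minus I.a_inv_closed by auto
  next
    fix a y assume "a \<in> {r \<in> carrier R. r \<otimes> x \<in> I}" "y \<in> carrier R"
    then show "y \<otimes> a \<in> {r \<in> carrier R. r \<otimes> x \<in> I}" using xc m_assoc I.I_l_closed by auto
  qed (use xc in auto)
  moreover have "gcomp G R A r g \<otimes> x \<in> I" if "r \<in> carrier R" "r \<otimes> x \<in> I" "g \<in> carrier G" for r g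
  proof -
    obtain h where h: "h \<in> carrier G" "x \<in> A h" using x by (rule homogE)
    have "gcomp G R A (r \<otimes> x) (g \<otimes>\<^bsub>G\<^esub> h) \<in> I"
      using graded_ideal_gcomp[OF I that(2)] that(3) h(1) by simp
    then show ?thesis using gcomp_mult_component[OF that(1) h that(3)] by simp
  qed
  ultimately show ?thesis unfolding graded_ideal_def using gcomp_closed by auto
qed

lemma Spec_g_prime:
  "p \<in> Spec_g G R A \<Longrightarrow> a \<in> homog G A \<Longrightarrow> b \<in> homog G A \<Longrightarrow> a \<otimes> b \<in> p \<Longrightarrow> a \<in> p \<or> b \<in> p"
  unfolding Spec_g_def graded_prime_ideal_def by blast

lemma Spec_g_graded_ideal: "p \<in> Spec_g G R A \<Longrightarrow> graded_ideal G R A p"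
  unfolding Spec_g_def graded_prime_ideal_def by blast

lemma Spec_g_ideal: "p \<in> Spec_g G R A \<Longrightarrow> ideal p R"
  using Spec_g_graded_ideal graded_ideal_imp_ideal by blast

lemma Spec_g_subset: "p \<in> Spec_g G R A \<Longrightarrow> p \<subseteq> carrier R"
  using Spec_g_graded_ideal graded_ideal_subset by blast

lemma one_notin_Spec_g: "p \<in> Spec_g G R A \<Longrightarrow> \<one> \<notin> p"
  unfolding Spec_g_def graded_prime_ideal_def
  using graded_ideal_imp_ideal ideal.one_imp_carrier by blast

lemma Spec_gI:
  assumes "graded_ideal G R A p" "\<one> \<notin> p"
    "\<And>a b. a \<in> homog G A \<Longrightarrow> b \<in> homog G A \<Longrightarrow> a \<otimes> b \<in> p \<Longrightarrow> a \<in> p \<or> b \<in> p"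
  shows "p \<in> Spec_g G R A"
  using assms unfolding Spec_g_def graded_prime_ideal_def by auto

lemma Spec_g_pow_mem_imp_mem:
  assumes p: "p \<in> Spec_g G R A" and a: "a \<in> homog G A" and "a [^] (n::nat) \<in> p"
  shows "a \<in> p"
  using assms(3)
proof (induct n)
  case (Suc n)
  then show ?case
    using Spec_g_prime[OF p homog_pow[OF a] a] a homog_closed by auto
qed (use one_notin_Spec_g p in simp)

text \<open>If \<open>a, b \<notin> P\<close> but \<open>a b \<in> P\<close>, maximality applied to \<open>(P : a)\<close> and then to \<open>(P : s)\<close>
  produces \<open>s, t \<in> S\<close> with \<open>t s \<in> P\<close>.\<close>

lemma maximal_disjoint_graded_ideal_Spec_g:
  assumes P: "graded_ideal G R A P" "P \<inter> S = {}" and S: "S \<subseteq> homog G A" "\<one> \<in> S"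
    and mult: "\<And>s t. s \<in> S \<Longrightarrow> t \<in> S \<Longrightarrow> s \<otimes> t \<in> S"
    and max: "\<And>Q. graded_ideal G R A Q \<Longrightarrow> P \<subseteq> Q \<Longrightarrow> Q \<inter> S = {} \<Longrightarrow> Q = P"
  shows "P \<in> Spec_g G R A"
proof -
  interpret P: ideal P R using P(1) graded_ideal_imp_ideal by auto
  have meets: "\<exists>s\<in>S. s \<otimes> x \<in> P"
    if x: "x \<in> homog G A" and y: "y \<otimes> x \<in> P" "y \<in> carrier R" "y \<notin> P" for x y
  proof (rule ccontr)
    let ?Q = "{r \<in> carrier R. r \<otimes> x \<in> P}"
    assume "\<not> ?thesis"
    then have "?Q \<inter> S = {}" by blast
    moreover have "P \<subseteq> ?Q"
    proof
      fix r assume "r \<in> P"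
      then show "r \<in> ?Q" using P.I_r_closed[OF _ homog_closed[OF x]] P.Icarr by blast
    qed
    ultimately have "?Q = P" using max graded_ideal_quotient_homog[OF P(1) x] by blast
    then show False using y by blast
  qed
  have "a \<in> P \<or> b \<in> P" if a: "a \<in> homog G A" and b: "b \<in> homog G A" and ab: "a \<otimes> b \<in> P" for a b
  proof (rule ccontr)
    assume nab: "\<not> (a \<in> P \<or> b \<in> P)"
    have ac: "a \<in> carrier R" and bc: "b \<in> carrier R" using a b homog_closed by auto
    have "b \<otimes> a \<in> P" using ab ac bc m_comm by simp
    then obtain s where s: "s \<in> S" "s \<otimes> a \<in> P" using meets[OF a _ bc] nab by blast
    have sc: "s \<in> carrier R" using s S homog_closed by blast
    have "a \<otimes> s \<in> P" using s(2) ac sc m_comm by simp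
    then obtain t where t: "t \<in> S" "t \<otimes> s \<in> P" using meets[of s a] s(1) S(1) nab ac by blast
    then show False using mult[OF t(1) s(1)] P(2) by blast
  qed
  moreover have "\<one> \<notin> P" using S P(2) by blast
  ultimately show ?thesis using P(1) by (rule_tac Spec_gI) blast+
qed

lemma ex_Spec_g_disjoint:
  assumes I: "graded_ideal G R A I" and S: "S \<subseteq> homog G A" "\<one> \<in> S"
    and mult: "\<And>s t. s \<in> S \<Longrightarrow> t \<in> S \<Longrightarrow> s \<otimes> t \<in> S"
    and disj: "I \<inter> S = {}"
  shows "\<exists>p \<in> Spec_g G R A. I \<subseteq> p \<and> p \<inter> S = {}"
proof -
  let ?F = "{P. graded_ideal G R A P \<and> I \<subseteq> P \<and> P \<inter> S = {}}"
  have "\<exists>P\<in>?F. \<forall>Z\<in>?F. P \<subseteq> Z \<longrightarrow> Z = P"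
  proof (rule subset_Zorn_nonempty)
    fix C assume ne: "C \<noteq> {}" and "subset.chain ?F C"
    then have CF: "C \<subseteq> ?F" and chain: "\<forall>Z\<in>C. \<forall>Y\<in>C. Z \<subseteq> Y \<or> Y \<subseteq> Z"
      by (auto simp: subset_chain_def)
    have "graded_ideal G R A (\<Union>C)"
    proof (rule graded_ideal_Union_directed[OF ne])
      show "\<And>I. I \<in> C \<Longrightarrow> graded_ideal G R A I" using CF by blast
      fix I J assume IJ: "I \<in> C" "J \<in> C"
      then have "I \<subseteq> J \<or> J \<subseteq> I" using chain by simp
      then show "\<exists>K\<in>C. I \<subseteq> K \<and> J \<subseteq> K" using IJ by blast
    qed
    moreover have "I \<subseteq> \<Union>C" "\<Union>C \<inter> S = {}" using ne CF by auto
    ultimately show "\<Union>C \<in> ?F" by blast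
  qed (use I disj in auto)
  then obtain P where P: "graded_ideal G R A P" "I \<subseteq> P" "P \<inter> S = {}"
    and max: "\<And>Z. Z \<in> ?F \<Longrightarrow> P \<subseteq> Z \<Longrightarrow> Z = P" by auto
  have "P \<in> Spec_g G R A"
  proof (rule maximal_disjoint_graded_ideal_Spec_g[OF P(1,3) S mult])
    fix Q assume "graded_ideal G R A Q" "P \<subseteq> Q" "Q \<inter> S = {}"
    then show "Q = P" using max P(2) by blast
  qed
  then show ?thesis using P(2,3) by blast
qed

lemma ex_Spec_g_above:
  assumes I: "graded_ideal G R A I" and "I \<noteq> carrier R"
  shows "\<exists>p \<in> Spec_g G R A. I \<subseteq> p"
proof -
  have "\<one> \<notin> I" using assms graded_ideal_imp_ideal ideal.one_imp_carrier by blast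
  then show ?thesis using ex_Spec_g_disjoint[OF I, of "{\<one>}"] homog_one by auto
qed

lemma gr_radical_eq:
  assumes I: "graded_ideal G R A I"
  shows "gr_radical G R A I = {x \<in> carrier R. \<forall>p \<in> Spec_g G R A. I \<subseteq> p \<longrightarrow> x \<in> p}"
proof (intro equalityI subsetI)
  fix x assume x: "x \<in> gr_radical G R A I"
  then have xc: "x \<in> carrier R" unfolding gr_radical_def by auto
  have "x \<in> p" if p: "p \<in> Spec_g G R A" "I \<subseteq> p" for p
  proof (rule ideal_mem_if_gcomps_mem[OF Spec_g_ideal[OF p(1)] xc])
    fix g assume g: "g \<in> carrier G"
    then obtain n where "gcomp G R A x g [^] (n::nat) \<in> I" using x unfolding gr_radical_def by auto
    then show "gcomp G R A x g \<in> p"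
      using Spec_g_pow_mem_imp_mem[OF p(1) gcomp_in_homog[OF xc g]] p(2) by auto
  qed
  then show "x \<in> {x \<in> carrier R. \<forall>p \<in> Spec_g G R A. I \<subseteq> p \<longrightarrow> x \<in> p}" using xc by blast
next
  fix x assume x: "x \<in> {x \<in> carrier R. \<forall>p \<in> Spec_g G R A. I \<subseteq> p \<longrightarrow> x \<in> p}"
  have "\<exists>n::nat. gcomp G R A x g [^] n \<in> I" if g: "g \<in> carrier G" for g
  proof (rule ccontr)
    let ?a = "gcomp G R A x g"
    let ?S = "range (\<lambda>n::nat. ?a [^] n)"
    have a: "?a \<in> homog G A" using x g gcomp_in_homog by blast
    assume "\<not> ?thesis"
    then have "I \<inter> ?S = {}" by auto
    moreover have "\<And>s t. s \<in> ?S \<Longrightarrow> t \<in> ?S \<Longrightarrow> s \<otimes> t \<in> ?S"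
      using homog_closed[OF a] by (auto simp: nat_pow_mult)
    moreover have "?S \<subseteq> homog G A" "\<one> \<in> ?S"
      using a homog_pow by (auto intro: range_eqI[of _ _ 0])
    ultimately obtain p where p: "p \<in> Spec_g G R A" "I \<subseteq> p" "p \<inter> ?S = {}"
      using ex_Spec_g_disjoint[OF I] by meson
    then have "?a [^] (1::nat) \<in> p"
      using x graded_ideal_gcomp[OF Spec_g_graded_ideal[OF p(1)] _ g] homog_closed[OF a] by auto
    then show False using p(3) by blast
  qed
  then show "x \<in> gr_radical G R A I" using x unfolding gr_radical_def by auto
qed

lemma gr_radical_subset_Spec_g:
  "graded_ideal G R A I \<Longrightarrow> p \<in> Spec_g G R A \<Longrightarrow> I \<subseteq> p \<Longrightarrow> gr_radical G R A I \<subseteq> p"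
  using gr_radical_eq by auto

lemma graded_ideal_subset_gr_radical: "graded_ideal G R A I \<Longrightarrow> I \<subseteq> gr_radical G R A I"
  using gr_radical_eq graded_ideal_subset by fastforce

lemma graded_ideal_gr_radical:
  assumes I: "graded_ideal G R A I"
  shows "graded_ideal G R A (gr_radical G R A I)"
proof -
  have "gr_radical G R A I = \<Inter>(insert (carrier R) {p \<in> Spec_g G R A. I \<subseteq> p})"
    unfolding gr_radical_eq[OF I] by auto
  then show ?thesis
    by (metis (no_types, lifting) graded_ideal_Inter graded_ideal_carrier Spec_g_graded_ideal
        insert_iff insert_not_empty mem_Collect_eq)
qed

lemma gr_radical_Spec_g: "p \<in> Spec_g G R A \<Longrightarrow> gr_radical G R A p = p"
  by (meson Spec_g_graded_ideal graded_ideal_subset_gr_radical gr_radical_subset_Spec_g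
      subset_antisym subset_refl)

lemma gr_radical_proper:
  assumes I: "graded_ideal G R A I" and "I \<noteq> carrier R"
  shows "gr_radical G R A I \<noteq> carrier R"
proof
  assume "gr_radical G R A I = carrier R"
  moreover obtain p where "p \<in> Spec_g G R A" "I \<subseteq> p" using ex_Spec_g_above assms by blast
  ultimately show False using gr_radical_subset_Spec_g[OF I] one_notin_Spec_g by blast
qed

lemma gr_radical_homog_pow_mem:
  assumes "graded_ideal G R A I" "a \<in> homog G A" "a [^] (n::nat) \<in> gr_radical G R A I"
  shows "a \<in> gr_radical G R A I"
  using assms Spec_g_pow_mem_imp_mem homog_closed unfolding gr_radical_eq[OF assms(1)] by blast

lemma gr_radical_homogD:
  assumes "a \<in> homog G A" "a \<in> gr_radical G R A I"
  shows "\<exists>n::nat. a [^] n \<in> I"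
proof -
  obtain h where "h \<in> carrier G" "a \<in> A h" using assms(1) by (rule homogE)
  then show ?thesis using assms gcomp_of_component unfolding gr_radical_def by force
qed

lemma Spec_g_subset_qpSpec_ring: "Spec_g G R A \<subseteq> qpSpec_ring G R A"
proof
  fix p assume p: "p \<in> Spec_g G R A"
  then have "p \<noteq> carrier R" using one_notin_Spec_g one_closed by blast
  then show "p \<in> qpSpec_ring G R A"
    unfolding qpSpec_ring_def graded_qp_ideal_def mem_Collect_eq gr_radical_Spec_g[OF p]
    using Spec_g_graded_ideal[OF p] Spec_g_prime[OF p] by blast
qed

definition graded_Idl :: "'a set \<Rightarrow> 'a set" where
  "graded_Idl Y = \<Inter>{I. graded_ideal G R A I \<and> Y \<subseteq> I}"

lemma graded_ideal_graded_Idl: "Y \<subseteq> carrier R \<Longrightarrow> graded_ideal G R A (graded_Idl Y)"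
  unfolding graded_Idl_def by (rule graded_ideal_Inter) (auto intro: graded_ideal_carrier)

lemma graded_Idl_incl: "Y \<subseteq> carrier R \<Longrightarrow> Y \<subseteq> graded_Idl Y"
  unfolding graded_Idl_def by auto

lemma graded_Idl_least: "graded_ideal G R A I \<Longrightarrow> Y \<subseteq> I \<Longrightarrow> graded_Idl Y \<subseteq> I"
  unfolding graded_Idl_def by auto

lemma graded_Idl_subset_Spec_g_iff:
  "p \<in> Spec_g G R A \<Longrightarrow> Y \<subseteq> carrier R \<Longrightarrow> graded_Idl Y \<subseteq> p \<longleftrightarrow> Y \<subseteq> p"
  using graded_Idl_least graded_Idl_incl Spec_g_graded_ideal by blast

lemma graded_Idl_mono: "Y \<subseteq> Z \<Longrightarrow> Z \<subseteq> carrier R \<Longrightarrow> graded_Idl Y \<subseteq> graded_Idl Z"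
  using graded_Idl_least graded_ideal_graded_Idl graded_Idl_incl by (metis subset_trans)

text \<open>The graded ideals generated by finite subsets of \<open>Y\<close> form a directed family, whose union
  is therefore a graded ideal containing \<open>Y\<close>.\<close>

lemma graded_Idl_finite_support:
  assumes Y: "Y \<subseteq> carrier R" and x: "x \<in> graded_Idl Y"
  shows "\<exists>Y'. Y' \<subseteq> Y \<and> finite Y' \<and> x \<in> graded_Idl Y'"
proof -
  let ?C = "{graded_Idl Y' | Y'. Y' \<subseteq> Y \<and> finite Y'}"
  have "graded_ideal G R A (\<Union>?C)"
  proof (rule graded_ideal_Union_directed)
    fix I J assume "I \<in> ?C" "J \<in> ?C"
    then obtain Y1 Y2 where "I = graded_Idl Y1" "J = graded_Idl Y2"
      "Y1 \<subseteq> Y" "Y2 \<subseteq> Y" "finite Y1" "finite Y2" by auto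
    moreover have "Y1 \<union> Y2 \<subseteq> carrier R" using calculation Y by auto
    ultimately show "\<exists>K\<in>?C. I \<subseteq> K \<and> J \<subseteq> K"
      using graded_Idl_mono[of _ "Y1 \<union> Y2"] by (intro bexI[of _ "graded_Idl (Y1 \<union> Y2)"]) auto
  qed (use Y graded_ideal_graded_Idl in auto)
  moreover have "Y \<subseteq> \<Union>?C" using Y graded_Idl_incl[of "{_}"] by blast
  ultimately have "graded_Idl Y \<subseteq> \<Union>?C" by (rule graded_Idl_least)
  then show ?thesis using x by auto
qed
end

section \<open>Spectral spaces and pulled-back topologies\<close>

lemma irreducible_in_continuous_image:
  assumes f: "continuous_map T T' f" and S: "irreducible_in T S"
  shows "irreducible_in T' (f ` S)"
proof -
  from S have S_sub: "S \<subseteq> topspace T" and S_ne: "S \<noteq> {}"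
    and S_irr: "\<forall>C1 C2. closedin T C1 \<and> closedin T C2 \<and> S \<subseteq> C1 \<union> C2 \<longrightarrow> S \<subseteq> C1 \<or> S \<subseteq> C2"
    unfolding irreducible_in_def by auto
  have "f ` S \<subseteq> C1 \<or> f ` S \<subseteq> C2"
    if C: "closedin T' C1" "closedin T' C2" "f ` S \<subseteq> C1 \<union> C2" for C1 C2
  proof -
    let ?P = "\<lambda>C. {x \<in> topspace T. f x \<in> C}"
    have "closedin T (?P C1)" "closedin T (?P C2)"
      using C closedin_continuous_map_preimage[OF f] by blast+
    moreover have "S \<subseteq> ?P C1 \<union> ?P C2" using C(3) S_sub by blast
    ultimately have "S \<subseteq> ?P C1 \<or> S \<subseteq> ?P C2" using S_irr by blast
    then show ?thesis by blast
  qed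
  moreover have "f ` S \<subseteq> topspace T'"
    using S_sub f continuous_map_image_subset_topspace by blast
  ultimately show ?thesis unfolding irreducible_in_def using S_ne by blast
qed

lemma homeomorphic_map_compactin_Int:
  assumes f: "homeomorphic_map T T' f"
    and Int': "compactin T' (f ` U \<inter> f ` V)"
    and U: "openin T U" and V: "openin T V"
  shows "compactin T (U \<inter> V)"
proof -
  have "U \<subseteq> topspace T" "V \<subseteq> topspace T" using U V openin_subset by blast+
  moreover from this have "f ` (U \<inter> V) = f ` U \<inter> f ` V"
    by (rule inj_on_image_Int[OF homeomorphic_imp_injective_map[OF f]])
  ultimately show ?thesis using Int' homeomorphic_map_compactness_eq[OF f] by auto
qed

lemma homeomorphic_map_compact_open_basis:
  assumes f: "homeomorphic_map T T' f"
    and basis': "\<And>W y. openin T' W \<Longrightarrow> y \<in> W \<Longrightarrow>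
      \<exists>U. openin T' U \<and> compactin T' U \<and> y \<in> U \<and> U \<subseteq> W"
    and W: "openin T W" "x \<in> W"
  shows "\<exists>U. openin T U \<and> compactin T U \<and> x \<in> U \<and> U \<subseteq> W"
proof -
  note open_iff = homeomorphic_map_openness_eq[OF f]
    and compact_iff = homeomorphic_map_compactness_eq[OF f]
  have inj: "inj_on f (topspace T)" and surj: "f ` topspace T = topspace T'"
    using f homeomorphic_imp_injective_map homeomorphic_imp_surjective_map by blast+
  have WT: "W \<subseteq> topspace T" using W openin_subset by blast
  have "openin T' (f ` W)" using W(1) open_iff by blast
  then obtain U' where U': "openin T' U'" "compactin T' U'" "f x \<in> U'" "U' \<subseteq> f ` W"
    using basis'[of "f ` W" "f x"] W(2) by blast
  let ?U = "{x \<in> topspace T. f x \<in> U'}"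
  have "f ` ?U = U'"
  proof
    show "U' \<subseteq> f ` ?U"
    proof
      fix y assume "y \<in> U'"
      then obtain z where "z \<in> W" "y = f z" using U'(4) by blast
      then show "y \<in> f ` ?U" using WT \<open>y \<in> U'\<close> by blast
    qed
  qed blast
  moreover have "?U \<subseteq> W"
  proof
    fix z assume z: "z \<in> ?U"
    then obtain w where "w \<in> W" "f z = f w" using U'(4) by blast
    then show "z \<in> W" using z WT inj_onD[OF inj] by auto
  qed
  moreover have "x \<in> ?U" using U'(3) W WT by blast
  moreover have "?U \<subseteq> topspace T" by blast
  ultimately have "openin T ?U" "compactin T ?U" "x \<in> ?U" "?U \<subseteq> W"
    using U'(1,2) unfolding open_iff compact_iff by simp_all
  then show ?thesis by blast
qed

lemma homeomorphic_map_generic_point: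
  assumes f: "homeomorphic_map T T' f"
    and generic': "\<And>S. closedin T' S \<Longrightarrow> irreducible_in T' S \<Longrightarrow> \<exists>y\<in>S. T' closure_of {y} = S"
    and S: "closedin T S" "irreducible_in T S"
  shows "\<exists>x\<in>S. T closure_of {x} = S"
proof -
  have "closedin T' (f ` S)" using S(1) homeomorphic_map_closedness_eq[OF f] by blast
  moreover have "irreducible_in T' (f ` S)"
    using S(2) homeomorphic_imp_continuous_map[OF f] by (rule irreducible_in_continuous_image[rotated])
  ultimately obtain x where x: "x \<in> S" "T' closure_of {f x} = f ` S"
    using generic' by blast
  have ST: "S \<subseteq> topspace T" using S closedin_subset by blast
  have "f ` (T closure_of {x}) = f ` S"
    using homeomorphic_map_closure_of[OF f, of "{x}"] x ST by auto
  then have "T closure_of {x} = S"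
    using inj_on_image_eq_iff[OF homeomorphic_imp_injective_map[OF f] closure_of_subset_topspace ST]
    by blast
  then show ?thesis using x by blast
qed

lemma homeomorphic_map_spectral_space:
  assumes f: "homeomorphic_map T T' f" and T': "spectral_space T'"
  shows "spectral_space T"
  unfolding spectral_space_def
proof (intro conjI allI impI)
  have TT': "T homeomorphic_space T'" using f by (rule homeomorphic_map_imp_homeomorphic_space)
  show "t0_space T" using T' homeomorphic_t0_space[OF TT'] unfolding spectral_space_def by blast
  show "compact_space T" using T' homeomorphic_compact_space[OF TT'] unfolding spectral_space_def by blast
next
  fix U V assume "openin T U \<and> compactin T U \<and> openin T V \<and> compactin T V"
  then show "compactin T (U \<inter> V)"
    using T' homeomorphic_map_compactin_Int[OF f] homeomorphic_map_openness_eq[OF f]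
      homeomorphic_map_compactness_eq[OF f] unfolding spectral_space_def by meson
next
  fix W x assume "openin T W \<and> x \<in> W"
  then show "\<exists>U. openin T U \<and> compactin T U \<and> x \<in> U \<and> U \<subseteq> W"
    using T' homeomorphic_map_compact_open_basis[OF f] unfolding spectral_space_def by meson
next
  fix S assume "closedin T S \<and> irreducible_in T S"
  then show "\<exists>x\<in>S. T closure_of {x} = S"
    using T' homeomorphic_map_generic_point[OF f] unfolding spectral_space_def by meson
qed

lemma topspace_pullback_topology_surj:
  "f ` S = topspace T' \<Longrightarrow> topspace (pullback_topology S f T') = S"
  unfolding topspace_pullback_topology by blast

lemma t0_space_pullback_topology_iff:
  assumes surj: "f ` S = topspace T'" and T': "t0_space T'"
  shows "t0_space (pullback_topology S f T') \<longleftrightarrow> inj_on f S"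
proof
  assume T: "t0_space (pullback_topology S f T')"
  show "inj_on f S"
  proof (rule inj_onI, rule ccontr)
    fix x y assume xy: "x \<in> S" "y \<in> S" "f x = f y" "x \<noteq> y"
    then obtain U where U: "openin (pullback_topology S f T') U" "x \<notin> U \<longleftrightarrow> y \<in> U"
      using T unfolding t0_space_def topspace_pullback_topology_surj[OF surj] by blast
    obtain V where "U = f -` V \<inter> S" using U(1) unfolding openin_pullback_topology by blast
    then show False using U(2) xy by simp
  qed
next
  assume inj: "inj_on f S"
  show "t0_space (pullback_topology S f T')"
    unfolding t0_space_def topspace_pullback_topology_surj[OF surj]
  proof (intro ballI impI)
    fix x y assume xy: "x \<in> S" "y \<in> S" "x \<noteq> y"
    then have "f x \<in> topspace T'" "f y \<in> topspace T'" "f x \<noteq> f y"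
      using surj inj_onD[OF inj] by blast+
    then obtain V where "openin T' V" "f x \<notin> V \<longleftrightarrow> f y \<in> V"
      using T' unfolding t0_space_def by blast
    moreover have "openin (pullback_topology S f T') (f -` V \<inter> S)"
      using calculation(1) unfolding openin_pullback_topology by blast
    ultimately show "\<exists>U. openin (pullback_topology S f T') U \<and> (x \<notin> U \<longleftrightarrow> y \<in> U)"
      using xy by blast
  qed
qed

lemma homeomorphic_map_pullback_topology_iff:
  assumes surj: "f ` S = topspace T'"
  shows "homeomorphic_map (pullback_topology S f T') T' f \<longleftrightarrow> inj_on f S"
proof
  assume "homeomorphic_map (pullback_topology S f T') T' f"
  then show "inj_on f S"
    using homeomorphic_imp_injective_map topspace_pullback_topology_surj[OF surj] by metis
next
  assume inj: "inj_on f S"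
  show "homeomorphic_map (pullback_topology S f T') T' f"
  proof (rule bijective_open_imp_homeomorphic_map)
    show "continuous_map (pullback_topology S f T') T' f"
      using continuous_map_pullback[OF continuous_map_id] by (simp add: id_def comp_def)
    show "open_map (pullback_topology S f T') T' f"
      unfolding open_map_def openin_pullback_topology
    proof (intro allI impI, elim exE conjE)
      fix U V assume "openin T' V" "U = f -` V \<inter> S"
      moreover have "f ` (f -` V \<inter> S) = V"
      proof
        show "V \<subseteq> f ` (f -` V \<inter> S)"
        proof
          fix v assume v: "v \<in> V"
          then obtain s where "s \<in> S" "v = f s"
            using openin_subset[OF \<open>openin T' V\<close>] surj by blast
          then show "v \<in> f ` (f -` V \<inter> S)" using v by blast
        qed
      qed blast
      ultimately show "openin T' (f ` U)" by simp
    qed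
  qed (use surj inj topspace_pullback_topology_surj[OF surj] in auto)
qed


lemma spectral_space_pullback_topology_iff:
  assumes surj: "f ` S = topspace T'" and T': "spectral_space T'"
  shows "spectral_space (pullback_topology S f T') \<longleftrightarrow> inj_on f S"
proof
  assume "spectral_space (pullback_topology S f T')"
  then have "t0_space (pullback_topology S f T')" unfolding spectral_space_def by blast
  moreover have "t0_space T'" using T' unfolding spectral_space_def by blast
  ultimately show "inj_on f S" using t0_space_pullback_topology_iff[OF surj] by blast
next
  assume "inj_on f S"
  then have "homeomorphic_map (pullback_topology S f T') T' f"
    using homeomorphic_map_pullback_topology_iff[OF surj] by blast
  then show "spectral_space (pullback_topology S f T')" using T' by (rule homeomorphic_map_spectral_space)
qed

section \<open>The Zariski topology on graded primes\<close>

context graded_cring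
begin

definition zero_locus :: "'a set \<Rightarrow> 'a set set" where
  "zero_locus Y = {p \<in> Spec_g G R A. Y \<subseteq> p}"

lemma mem_zero_locus [simp]: "p \<in> zero_locus Y \<longleftrightarrow> p \<in> Spec_g G R A \<and> Y \<subseteq> p"
  unfolding zero_locus_def by blast

lemma zero_locus_subset: "zero_locus Y \<subseteq> Spec_g G R A"
  by auto

lemma zero_locus_graded_Idl: "Y \<subseteq> carrier R \<Longrightarrow> zero_locus (graded_Idl Y) = zero_locus Y"
  using graded_Idl_subset_Spec_g_iff by (simp add: zero_locus_def cong: conj_cong)

lemma ex_homog_not_in_Spec_g:
  assumes I: "graded_ideal G R A I" and p: "p \<in> Spec_g G R A" and "\<not> I \<subseteq> p"
  shows "\<exists>a\<in>I \<inter> homog G A. a \<notin> p"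
proof -
  obtain x where x: "x \<in> I" "x \<notin> p" using assms(3) by blast
  then have xc: "x \<in> carrier R" using graded_ideal_subset[OF I] by blast
  then obtain g where g: "g \<in> carrier G" "gcomp G R A x g \<notin> p"
    using ideal_mem_if_gcomps_mem[OF Spec_g_ideal[OF p] xc] x(2) by blast
  then show ?thesis using graded_ideal_gcomp[OF I x(1)] gcomp_in_homog[OF xc] by blast
qed

lemma zero_locus_Int:
  assumes I: "graded_ideal G R A I" and J: "graded_ideal G R A J"
  shows "zero_locus (I \<inter> J) = zero_locus I \<union> zero_locus J"
proof (intro equalityI subsetI)
  fix p assume "p \<in> zero_locus (I \<inter> J)"
  then have p: "p \<in> Spec_g G R A" and IJ: "I \<inter> J \<subseteq> p" by auto
  show "p \<in> zero_locus I \<union> zero_locus J"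
  proof (rule ccontr)
    assume "p \<notin> zero_locus I \<union> zero_locus J"
    then obtain a b where a: "a \<in> I" "a \<in> homog G A" "a \<notin> p" and b: "b \<in> J" "b \<in> homog G A" "b \<notin> p"
      using ex_homog_not_in_Spec_g[OF I p] ex_homog_not_in_Spec_g[OF J p] p by auto
    have "a \<otimes> b \<in> I" using ideal.I_r_closed[OF graded_ideal_imp_ideal[OF I] a(1) homog_closed[OF b(2)]] .
    moreover have "a \<otimes> b \<in> J" using ideal.I_l_closed[OF graded_ideal_imp_ideal[OF J] b(1) homog_closed[OF a(2)]] .
    ultimately show False using IJ Spec_g_prime[OF p a(2) b(2)] a(3) b(3) by blast
  qed
qed auto

lemma istopology_zariski:
  "istopology (\<lambda>U. \<exists>Y. Y \<subseteq> carrier R \<and> U = Spec_g G R A - zero_locus Y)"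
  unfolding istopology_def
proof (intro conjI allI impI)
  fix U V assume "\<exists>Y. Y \<subseteq> carrier R \<and> U = Spec_g G R A - zero_locus Y"
    "\<exists>Y. Y \<subseteq> carrier R \<and> V = Spec_g G R A - zero_locus Y"
  then obtain Y1 Y2 where Y: "Y1 \<subseteq> carrier R" "Y2 \<subseteq> carrier R"
    and UV: "U = Spec_g G R A - zero_locus Y1" "V = Spec_g G R A - zero_locus Y2" by blast
  let ?I = "graded_Idl Y1 \<inter> graded_Idl Y2"
  have "zero_locus ?I = zero_locus Y1 \<union> zero_locus Y2"
    using zero_locus_Int[OF graded_ideal_graded_Idl[OF Y(1)] graded_ideal_graded_Idl[OF Y(2)]]
    by (simp add: zero_locus_graded_Idl[OF Y(1)] zero_locus_graded_Idl[OF Y(2)])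
  then have "U \<inter> V = Spec_g G R A - zero_locus ?I" unfolding UV by (simp add: Diff_Un)
  moreover have "?I \<subseteq> carrier R"
    using graded_ideal_subset[OF graded_ideal_graded_Idl[OF Y(1)]] by blast
  ultimately show "\<exists>Y. Y \<subseteq> carrier R \<and> U \<inter> V = Spec_g G R A - zero_locus Y" by blast
next
  fix KK assume KK: "\<forall>K\<in>KK. \<exists>Y. Y \<subseteq> carrier R \<and> K = Spec_g G R A - zero_locus Y"
  define Y\<^sub>0 where "Y\<^sub>0 = \<Union>{Y. Y \<subseteq> carrier R \<and> Spec_g G R A - zero_locus Y \<in> KK}"
  have "\<Union>KK = Spec_g G R A - zero_locus Y\<^sub>0"
  proof (intro equalityI subsetI)
    fix p assume "p \<in> \<Union>KK"
    then obtain K where K: "K \<in> KK" "p \<in> K" by blast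
    then obtain Y where Y: "Y \<subseteq> carrier R" "K = Spec_g G R A - zero_locus Y" using KK by blast
    then have "Y \<subseteq> Y\<^sub>0" using K(1) unfolding Y\<^sub>0_def by blast
    moreover have "p \<in> Spec_g G R A" "\<not> Y \<subseteq> p" using K(2) Y(2) by simp_all
    ultimately show "p \<in> Spec_g G R A - zero_locus Y\<^sub>0" by auto
  next
    fix p assume p: "p \<in> Spec_g G R A - zero_locus Y\<^sub>0"
    then obtain y where "y \<in> Y\<^sub>0" "y \<notin> p" by auto
    then obtain Y where Y: "Y \<subseteq> carrier R" "Spec_g G R A - zero_locus Y \<in> KK" "y \<in> Y"
      unfolding Y\<^sub>0_def by blast
    have "p \<in> Spec_g G R A - zero_locus Y" using p \<open>y \<notin> p\<close> Y(3) by auto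
    then show "p \<in> \<Union>KK" using Y(2) by blast
  qed
  moreover have "Y\<^sub>0 \<subseteq> carrier R" unfolding Y\<^sub>0_def by blast
  ultimately show "\<exists>Y. Y \<subseteq> carrier R \<and> \<Union>KK = Spec_g G R A - zero_locus Y" by blast
qed

lemma openin_zariski_g:
  "openin (zariski_g G R A) U \<longleftrightarrow> (\<exists>Y. Y \<subseteq> carrier R \<and> U = Spec_g G R A - zero_locus Y)"
proof -
  have iff: "(\<exists>I. graded_ideal G R A I \<and> U = Spec_g G R A - zero_locus I)
      \<longleftrightarrow> (\<exists>Y. Y \<subseteq> carrier R \<and> U = Spec_g G R A - zero_locus Y)" for U
  proof
    assume "\<exists>I. graded_ideal G R A I \<and> U = Spec_g G R A - zero_locus I"
    then show "\<exists>Y. Y \<subseteq> carrier R \<and> U = Spec_g G R A - zero_locus Y"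
      using graded_ideal_subset by blast
  next
    assume "\<exists>Y. Y \<subseteq> carrier R \<and> U = Spec_g G R A - zero_locus Y"
    then obtain Y where "Y \<subseteq> carrier R" "U = Spec_g G R A - zero_locus Y" by blast
    then have "graded_ideal G R A (graded_Idl Y)"
      "U = Spec_g G R A - zero_locus (graded_Idl Y)"
      using graded_ideal_graded_Idl zero_locus_graded_Idl by simp_all
    then show "\<exists>I. graded_ideal G R A I \<and> U = Spec_g G R A - zero_locus I" by blast
  qed
  have "(\<lambda>U. \<exists>I. graded_ideal G R A I \<and> U = Spec_g G R A - {p \<in> Spec_g G R A. I \<subseteq> p})
      = (\<lambda>U. \<exists>Y. Y \<subseteq> carrier R \<and> U = Spec_g G R A - zero_locus Y)"
    unfolding zero_locus_def[symmetric] using iff by (rule ext)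
  then show ?thesis unfolding zariski_g_def using istopology_zariski by simp
qed

lemma topspace_zariski_g: "topspace (zariski_g G R A) = Spec_g G R A"
proof -
  have "zero_locus {\<one>} = {}" using one_notin_Spec_g by auto
  then have "openin (zariski_g G R A) (Spec_g G R A)"
    unfolding openin_zariski_g by (intro exI[of _ "{\<one>}"]) simp
  moreover have "topspace (zariski_g G R A) \<subseteq> Spec_g G R A"
    using openin_topspace[of "zariski_g G R A"] unfolding openin_zariski_g by blast
  ultimately show ?thesis using openin_subset by blast
qed

lemma closedin_zariski_g:
  "closedin (zariski_g G R A) F \<longleftrightarrow> (\<exists>Y. Y \<subseteq> carrier R \<and> F = zero_locus Y)"
proof
  assume "closedin (zariski_g G R A) F"
  then have F: "F \<subseteq> Spec_g G R A" "openin (zariski_g G R A) (Spec_g G R A - F)"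
    unfolding closedin_def topspace_zariski_g by blast+
  then obtain Y where "Y \<subseteq> carrier R" "Spec_g G R A - F = Spec_g G R A - zero_locus Y"
    unfolding openin_zariski_g by blast
  moreover from this(2) have "F = zero_locus Y" using F(1) zero_locus_subset by blast
  ultimately show "\<exists>Y. Y \<subseteq> carrier R \<and> F = zero_locus Y" by blast
next
  assume "\<exists>Y. Y \<subseteq> carrier R \<and> F = zero_locus Y"
  then have "F \<subseteq> Spec_g G R A" "openin (zariski_g G R A) (Spec_g G R A - F)"
    unfolding openin_zariski_g using zero_locus_subset by blast+
  then show "closedin (zariski_g G R A) F" unfolding closedin_def topspace_zariski_g by blast
qed

lemma closure_of_singleton_Spec_g:
  assumes p: "p \<in> Spec_g G R A"
  shows "zariski_g G R A closure_of {p} = zero_locus p"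
proof (rule equalityI)
  have "closedin (zariski_g G R A) (zero_locus p)"
    using Spec_g_subset[OF p] closedin_zariski_g by blast
  then show "zariski_g G R A closure_of {p} \<subseteq> zero_locus p"
    using p by (intro closure_of_minimal) auto
  show "zero_locus p \<subseteq> zariski_g G R A closure_of {p}"
  proof
    fix q assume q: "q \<in> zero_locus p"
    have "p \<in> U" if U: "q \<in> U" "openin (zariski_g G R A) U" for U
    proof -
      obtain Y where "U = Spec_g G R A - zero_locus Y" using U(2) openin_zariski_g by blast
      then show ?thesis using U(1) q p by auto
    qed
    then show "q \<in> zariski_g G R A closure_of {p}"
      unfolding in_closure_of topspace_zariski_g using q by auto
  qed
qed

lemma t0_space_zariski_g: "t0_space (zariski_g G R A)"
  unfolding t0_space_closure_of_sing topspace_zariski_g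
proof (intro ballI impI)
  fix p q assume pq: "p \<in> Spec_g G R A" "q \<in> Spec_g G R A"
    "zariski_g G R A closure_of {p} = zariski_g G R A closure_of {q}"
  then have eq: "zero_locus p = zero_locus q" using closure_of_singleton_Spec_g by simp
  have "p \<in> zero_locus q" "q \<in> zero_locus p"
    using eq pq(1,2) by (metis mem_zero_locus subset_refl)+
  then have "q \<subseteq> p" "p \<subseteq> q" by simp_all
  then show "p = q" by (rule equalityI[rotated])
qed

definition basic_open :: "'a \<Rightarrow> 'a set set" where
  "basic_open a = Spec_g G R A - zero_locus {a}"

lemma mem_basic_open [simp]: "p \<in> basic_open a \<longleftrightarrow> p \<in> Spec_g G R A \<and> a \<notin> p"
  unfolding basic_open_def by auto

lemma openin_basic_open: "a \<in> carrier R \<Longrightarrow> openin (zariski_g G R A) (basic_open a)"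
  unfolding basic_open_def openin_zariski_g by blast

lemma basic_open_mult:
  assumes a: "a \<in> homog G A" and b: "b \<in> homog G A"
  shows "basic_open (a \<otimes> b) = basic_open a \<inter> basic_open b"
proof (rule Set.set_eqI)
  fix p
  have "a \<otimes> b \<in> p \<longleftrightarrow> a \<in> p \<or> b \<in> p" if p: "p \<in> Spec_g G R A"
    using Spec_g_prime[OF p a b] ideal.I_r_closed[OF Spec_g_ideal[OF p] _ homog_closed[OF b]]
      ideal.I_l_closed[OF Spec_g_ideal[OF p] _ homog_closed[OF a]] by blast
  then show "p \<in> basic_open (a \<otimes> b) \<longleftrightarrow> p \<in> basic_open a \<inter> basic_open b" by auto
qed

definition homog_comps :: "'a set \<Rightarrow> 'a set" where
  "homog_comps Y = {gcomp G R A x g | x g. x \<in> Y \<and> g \<in> carrier G}"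

lemma homog_comps_subset: "Y \<subseteq> carrier R \<Longrightarrow> homog_comps Y \<subseteq> homog G A"
  unfolding homog_comps_def using gcomp_in_homog by blast

lemma subset_Spec_g_iff_homog_comps:
  assumes p: "p \<in> Spec_g G R A" and Y: "Y \<subseteq> carrier R"
  shows "Y \<subseteq> p \<longleftrightarrow> homog_comps Y \<subseteq> p"
proof
  assume "Y \<subseteq> p"
  then show "homog_comps Y \<subseteq> p"
    unfolding homog_comps_def using graded_ideal_gcomp[OF Spec_g_graded_ideal[OF p]] by blast
next
  assume H: "homog_comps Y \<subseteq> p"
  show "Y \<subseteq> p"
  proof
    fix x assume x: "x \<in> Y"
    show "x \<in> p"
    proof (rule ideal_mem_if_gcomps_mem[OF Spec_g_ideal[OF p]])
      show "x \<in> carrier R" using x Y by blast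
      fix g assume "g \<in> carrier G"
      then show "gcomp G R A x g \<in> p" using x H unfolding homog_comps_def by blast
    qed
  qed
qed

lemma open_eq_Union_basic_open:
  assumes Y: "Y \<subseteq> carrier R"
  shows "Spec_g G R A - zero_locus Y = \<Union>(basic_open ` homog_comps Y)"
proof (rule Set.set_eqI)
  fix p
  show "p \<in> Spec_g G R A - zero_locus Y \<longleftrightarrow> p \<in> \<Union>(basic_open ` homog_comps Y)"
    using subset_Spec_g_iff_homog_comps[OF _ Y, of p] by auto
qed

lemma basic_open_cover_imp_pow_mem:
  assumes a: "a \<in> homog G A" and Z: "\<Union>Zs \<subseteq> carrier R"
    and cover: "basic_open a \<subseteq> (\<Union>Z\<in>Zs. Spec_g G R A - zero_locus Z)"
  shows "\<exists>n::nat. a [^] n \<in> graded_Idl (\<Union>Zs)"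
proof -
  have "a \<in> p" if p: "p \<in> Spec_g G R A" "graded_Idl (\<Union>Zs) \<subseteq> p" for p
  proof (rule ccontr)
    assume "a \<notin> p"
    then have "p \<in> basic_open a" using p(1) by simp
    then obtain Z where "Z \<in> Zs" "p \<in> Spec_g G R A - zero_locus Z" using cover by blast
    moreover have "\<Union>Zs \<subseteq> p" using p graded_Idl_subset_Spec_g_iff[OF p(1) Z] by blast
    ultimately show False by auto
  qed
  then have "a \<in> gr_radical G R A (graded_Idl (\<Union>Zs))"
    unfolding gr_radical_eq[OF graded_ideal_graded_Idl[OF Z]] using homog_closed[OF a] by blast
  then show ?thesis using gr_radical_homogD[OF a] by blast
qed

lemma compactin_basic_open:
  assumes a: "a \<in> homog G A"
  shows "compactin (zariski_g G R A) (basic_open a)"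
  unfolding compactin_def
proof (intro conjI allI impI)
  show "basic_open a \<subseteq> topspace (zariski_g G R A)" unfolding topspace_zariski_g by auto
  fix UU assume UU: "(\<forall>U\<in>UU. openin (zariski_g G R A) U) \<and> basic_open a \<subseteq> \<Union>UU"
  define Zs where "Zs = {Z. Z \<subseteq> carrier R \<and> Spec_g G R A - zero_locus Z \<in> UU}"
  have Z: "\<Union>Zs \<subseteq> carrier R" unfolding Zs_def by blast
  have "basic_open a \<subseteq> (\<Union>Z\<in>Zs. Spec_g G R A - zero_locus Z)"
  proof
    fix p assume "p \<in> basic_open a"
    then obtain U where U: "U \<in> UU" "p \<in> U" using UU by blast
    then obtain Z where "Z \<subseteq> carrier R" "U = Spec_g G R A - zero_locus Z"
      using UU openin_zariski_g by blast
    then show "p \<in> (\<Union>Z\<in>Zs. Spec_g G R A - zero_locus Z)" using U unfolding Zs_def by blast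
  qed
  then obtain n where "a [^] (n::nat) \<in> graded_Idl (\<Union>Zs)"
    using basic_open_cover_imp_pow_mem[OF a Z] by blast
  then obtain Y where Y: "Y \<subseteq> \<Union>Zs" "finite Y" "a [^] n \<in> graded_Idl Y"
    using graded_Idl_finite_support[OF Z] by blast
  have "\<forall>y\<in>Y. \<exists>Z. Z \<in> Zs \<and> y \<in> Z" using Y(1) by blast
  from bchoice[OF this] obtain Zf where Zf: "\<forall>y\<in>Y. Zf y \<in> Zs \<and> y \<in> Zf y" by blast
  let ?F = "(\<lambda>y. Spec_g G R A - zero_locus (Zf y)) ` Y"
  have "basic_open a \<subseteq> \<Union>?F"
  proof
    fix p assume p: "p \<in> basic_open a"
    show "p \<in> \<Union>?F"
    proof (rule ccontr)
      assume "p \<notin> \<Union>?F"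
      then have "Y \<subseteq> p" using p Zf by fastforce
      moreover have "Y \<subseteq> carrier R" using Y(1) Z by blast
      ultimately have "a [^] n \<in> p"
        using Y(3) graded_Idl_subset_Spec_g_iff[of p Y] p by auto
      then show False using Spec_g_pow_mem_imp_mem a p by auto
    qed
  qed
  moreover have "finite ?F" "?F \<subseteq> UU" using Y(2) Zf unfolding Zs_def by auto
  ultimately show "\<exists>F. finite F \<and> F \<subseteq> UU \<and> basic_open a \<subseteq> \<Union>F" by blast
qed

lemma compact_open_eq_finite_Union_basic_open:
  assumes U: "openin (zariski_g G R A) U" "compactin (zariski_g G R A) U"
  shows "\<exists>F. finite F \<and> F \<subseteq> homog G A \<and> U = \<Union>(basic_open ` F)"
proof -
  obtain Y where Y: "Y \<subseteq> carrier R" "U = Spec_g G R A - zero_locus Y"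
    using U(1) openin_zariski_g by blast
  then have U_eq: "U = \<Union>(basic_open ` homog_comps Y)" using open_eq_Union_basic_open by simp
  have "\<forall>V\<in>basic_open ` homog_comps Y. openin (zariski_g G R A) V"
    using openin_basic_open homog_comps_subset[OF Y(1)] homog_closed by blast
  then obtain FF where FF: "finite FF" "FF \<subseteq> basic_open ` homog_comps Y" "U \<subseteq> \<Union>FF"
    using U(2) U_eq unfolding compactin_def by (metis order_refl)
  then obtain F where F: "F \<subseteq> homog_comps Y" "finite F" "FF = basic_open ` F"
    by (meson finite_subset_image)
  then have "U = \<Union>(basic_open ` F)" using FF(3) U_eq by blast
  then show ?thesis using F homog_comps_subset[OF Y(1)] by blast
qed

lemma compactin_Int_compact_open:
  assumes U: "openin (zariski_g G R A) U" "compactin (zariski_g G R A) U"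
    and V: "openin (zariski_g G R A) V" "compactin (zariski_g G R A) V"
  shows "compactin (zariski_g G R A) (U \<inter> V)"
proof -
  obtain F1 where F1: "finite F1" "F1 \<subseteq> homog G A" "U = \<Union>(basic_open ` F1)"
    using compact_open_eq_finite_Union_basic_open U by blast
  obtain F2 where F2: "finite F2" "F2 \<subseteq> homog G A" "V = \<Union>(basic_open ` F2)"
    using compact_open_eq_finite_Union_basic_open V by blast
  let ?F = "(\<lambda>(a, b). basic_open (a \<otimes> b)) ` (F1 \<times> F2)"
  have "U \<inter> V = \<Union>?F"
  proof (rule Set.set_eqI)
    fix q
    have "q \<in> U \<inter> V \<longleftrightarrow> (\<exists>a\<in>F1. \<exists>b\<in>F2. q \<in> basic_open a \<inter> basic_open b)"
      using F1(3) F2(3) by blast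
    also have "\<dots> \<longleftrightarrow> (\<exists>a\<in>F1. \<exists>b\<in>F2. q \<in> basic_open (a \<otimes> b))"
      using basic_open_mult F1(2) F2(2) by blast
    finally show "q \<in> U \<inter> V \<longleftrightarrow> q \<in> \<Union>?F" by blast
  qed
  moreover have "compactin (zariski_g G R A) (\<Union>?F)"
  proof (rule compactin_Union)
    show "finite ?F" using F1(1) F2(1) by blast
  next
    fix S assume "S \<in> ?F"
    then obtain a b where "a \<in> F1" "b \<in> F2" "S = basic_open (a \<otimes> b)" by blast
    then show "compactin (zariski_g G R A) S"
      using compactin_basic_open homog_mult F1(2) F2(2) by blast
  qed
  ultimately show ?thesis by simp
qed

lemma generic_point_zariski_g:
  assumes S: "closedin (zariski_g G R A) S" "irreducible_in (zariski_g G R A) S"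
  shows "\<exists>p\<in>S. zariski_g G R A closure_of {p} = S"
proof -
  obtain Y where Y: "Y \<subseteq> carrier R" "S = zero_locus Y" using S(1) closedin_zariski_g by blast
  have S_ne: "S \<noteq> {}" and S_irr: "\<And>C1 C2. closedin (zariski_g G R A) C1 \<Longrightarrow>
      closedin (zariski_g G R A) C2 \<Longrightarrow> S \<subseteq> C1 \<union> C2 \<Longrightarrow> S \<subseteq> C1 \<or> S \<subseteq> C2"
    using S(2) unfolding irreducible_in_def by blast+
  have S_Spec: "S \<subseteq> Spec_g G R A" using Y(2) zero_locus_subset by blast
  define p where "p = \<Inter>S"
  have "graded_ideal G R A p"
    unfolding p_def using S_ne S_Spec Spec_g_graded_ideal by (intro graded_ideal_Inter) auto
  moreover have "\<one> \<notin> p" unfolding p_def using S_ne S_Spec one_notin_Spec_g by blast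
  moreover have "a \<in> p \<or> b \<in> p" if a: "a \<in> homog G A" and b: "b \<in> homog G A" and ab: "a \<otimes> b \<in> p" for a b
  proof -
    have "S \<subseteq> zero_locus {a} \<union> zero_locus {b}"
    proof
      fix q assume q: "q \<in> S"
      then have "a \<in> q \<or> b \<in> q" using ab S_Spec Spec_g_prime[OF _ a b] unfolding p_def by blast
      then show "q \<in> zero_locus {a} \<union> zero_locus {b}" using q S_Spec by auto
    qed
    moreover have "closedin (zariski_g G R A) (zero_locus {a})" "closedin (zariski_g G R A) (zero_locus {b})"
      using a b homog_closed closedin_zariski_g by blast+
    ultimately have "S \<subseteq> zero_locus {a} \<or> S \<subseteq> zero_locus {b}" using S_irr by blast
    then show ?thesis unfolding p_def by auto
  qed
  ultimately have p: "p \<in> Spec_g G R A" by (rule Spec_gI)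
  have "Y \<subseteq> p" unfolding p_def using Y(2) by auto
  have "zero_locus p = S"
  proof (intro equalityI subsetI)
    fix q assume "q \<in> zero_locus p"
    then show "q \<in> S" using \<open>Y \<subseteq> p\<close> Y(2) by auto
  next
    fix q assume "q \<in> S"
    then show "q \<in> zero_locus p" using S_Spec unfolding p_def by auto
  qed
  moreover have "p \<in> S" using p \<open>Y \<subseteq> p\<close> Y(2) by simp
  ultimately show ?thesis using closure_of_singleton_Spec_g[OF p] by blast
qed

theorem spectral_space_zariski_g: "spectral_space (zariski_g G R A)"
  unfolding spectral_space_def
proof (intro conjI allI impI)
  have "basic_open \<one> = topspace (zariski_g G R A)"
    unfolding topspace_zariski_g using one_notin_Spec_g by auto
  then show "compact_space (zariski_g G R A)"
    unfolding compact_space_def using compactin_basic_open[OF homog_one] by simp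
next
  fix W p assume W: "openin (zariski_g G R A) W \<and> p \<in> W"
  then obtain Y where Y: "Y \<subseteq> carrier R" "W = Spec_g G R A - zero_locus Y"
    using openin_zariski_g by blast
  then obtain a where a: "a \<in> homog_comps Y" "p \<in> basic_open a"
    using W open_eq_Union_basic_open by auto
  moreover have "basic_open a \<subseteq> W" using a(1) Y open_eq_Union_basic_open by blast
  moreover have "a \<in> homog G A" using a(1) homog_comps_subset[OF Y(1)] by blast
  ultimately show "\<exists>U. openin (zariski_g G R A) U \<and> compactin (zariski_g G R A) U \<and> p \<in> U \<and> U \<subseteq> W"
    using openin_basic_open compactin_basic_open homog_closed by blast
qed (use t0_space_zariski_g compactin_Int_compact_open generic_point_zariski_g in blast)+

end

section \<open>Quotients by graded ideals\<close>

locale graded_quotient = graded_cring G R A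
  for G :: "'g monoid" and R :: "'a ring" (structure) and A +
  fixes I :: "'a set"
  assumes graded_ideal_I: "graded_ideal G R A I"
begin

sublocale I: ideal I R using graded_ideal_I by (rule graded_ideal_imp_ideal)

abbreviation proj :: "'a \<Rightarrow> 'a set" where "proj \<equiv> a_r_coset R I"

sublocale H: ring_hom_cring R "R Quot I" proj by (rule I.rcos_ring_hom_cring[OF is_cring])

lemma carrier_quot: "carrier (R Quot I) = proj ` carrier R"
  unfolding FactRing_def A_RCOSETS_def' by auto

lemma zero_quot: "\<zero>\<^bsub>R Quot I\<^esub> = I"
  unfolding FactRing_def by simp

lemma proj_eq_zero: "x \<in> I \<Longrightarrow> proj x = \<zero>\<^bsub>R Quot I\<^esub>"
  unfolding zero_quot by (rule I.a_rcos_const)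

lemma proj_eq_zero_imp_mem: "x \<in> carrier R \<Longrightarrow> proj x = \<zero>\<^bsub>R Quot I\<^esub> \<Longrightarrow> x \<in> I"
  using I.a_rcos_self[of x] unfolding zero_quot by simp

lemma proj_mem_image_iff:
  assumes J: "ideal J R" "I \<subseteq> J" and x: "x \<in> carrier R"
  shows "proj x \<in> proj ` J \<longleftrightarrow> x \<in> J"
proof -
  have "\<Union>(proj ` J) = J" by (rule iffD1[OF ideal_incl_iff[OF I.ideal_axioms J(1)] J(2), symmetric])
  moreover have "proj ` J \<subseteq> carrier (R Quot I)"
    unfolding carrier_quot using ideal.Icarr[OF J(1)] by blast
  ultimately show ?thesis using canonical_proj_vimage_mem_iff[OF I.ideal_axioms _ x, of "proj ` J"]
    by argo
qed

lemma proj_image_inj: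
  assumes "ideal J R" "I \<subseteq> J" "ideal J' R" "I \<subseteq> J'" "proj ` J = proj ` J'"
  shows "J = J'"
proof -
  have "J = \<Union>(proj ` J)" by (rule iffD1[OF ideal_incl_iff[OF I.ideal_axioms assms(1)] assms(2)])
  moreover have "J' = \<Union>(proj ` J')"
    by (rule iffD1[OF ideal_incl_iff[OF I.ideal_axioms assms(3)] assms(4)])
  ultimately show ?thesis using assms(5) by metis
qed

definition quot_grading :: "'g \<Rightarrow> 'a set set" where
  "quot_grading g = proj ` A g"

sublocale Q: additive_grading G "R Quot I" quot_grading
proof (rule additive_grading.intro)
  show "abelian_group (R Quot I)" by (rule H.S.abelian_group_axioms)
  show "g \<in> carrier G \<Longrightarrow> subgroup (quot_grading g) (add_monoid (R Quot I))" for g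
    unfolding quot_grading_def
    using ring_hom_ring.img_is_add_subgroup[OF I.rcos_ring_hom_ring] component_subgroup by blast
qed

lemma gdecomp_quot:
  assumes x: "x \<in> carrier R"
  shows "gdecomp G (R Quot I) quot_grading (proj x) (restrict (\<lambda>g. proj (gcomp G R A x g)) (carrier G))"
proof -
  let ?supp = "{g \<in> carrier G. gcomp G R A x g \<noteq> \<zero>}"
  let ?c = "restrict (\<lambda>g. proj (gcomp G R A x g)) (carrier G)"
  have "proj x = proj (\<Oplus>g\<in>?supp. gcomp G R A x g)"
    by (rule arg_cong[where f = proj, OF finsum_gcomp[OF x]])
  also have "\<dots> = (\<Oplus>\<^bsub>R Quot I\<^esub>g\<in>?supp. proj (gcomp G R A x g))"
    using H.hom_finsum[of "gcomp G R A x" ?supp] gcomp_closed[OF x] by (simp add: comp_def)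
  also have "\<dots> = (\<Oplus>\<^bsub>R Quot I\<^esub>g\<in>?supp. ?c g)"
    using gcomp_closed[OF x] by (intro H.S.finsum_cong') auto
  finally have sum: "proj x = (\<Oplus>\<^bsub>R Quot I\<^esub>g\<in>?supp. ?c g)" .
  show ?thesis
  proof (rule Q.gdecompI[where F = ?supp, OF _ _ _ _ _ sum])
    show "?c \<in> extensional (carrier G)" by (rule restrict_extensional)
    show "\<And>g. g \<in> carrier G \<Longrightarrow> ?c g \<in> quot_grading g"
      unfolding quot_grading_def using gcomp_in_component[OF x] by simp
  qed (use finite_gcomp_support[OF x] in auto)
qed

lemma gdecomp_quot_lift:
  assumes c: "gdecomp G (R Quot I) quot_grading \<xi> c"
  shows "\<exists>y a. gdecomp G R A y a \<and> proj y = \<xi> \<and> (\<forall>g\<in>carrier G. proj (a g) = c g)"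
proof -
  let ?supp = "{g \<in> carrier G. c g \<noteq> \<zero>\<^bsub>R Quot I\<^esub>}"
  have c_in: "\<forall>g\<in>carrier G. c g \<in> quot_grading g" using c unfolding gdecomp_def by (elim conjE)
  have fin: "finite ?supp" using c unfolding gdecomp_def by (elim conjE)
  have c_sum: "\<xi> = (\<Oplus>\<^bsub>R Quot I\<^esub>g\<in>?supp. c g)" using c unfolding gdecomp_def by (elim conjE)
  have c_closed: "c g \<in> carrier (R Quot I)" if "g \<in> carrier G" for g
    using c_in Q.component_subset that by blast
  have "\<forall>g\<in>carrier G. \<exists>a. a \<in> A g \<and> proj a = c g \<and> (c g = \<zero>\<^bsub>R Quot I\<^esub> \<longrightarrow> a = \<zero>)"
  proof
    fix g assume g: "g \<in> carrier G"
    show "\<exists>a. a \<in> A g \<and> proj a = c g \<and> (c g = \<zero>\<^bsub>R Quot I\<^esub> \<longrightarrow> a = \<zero>)"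
    proof (cases "c g = \<zero>\<^bsub>R Quot I\<^esub>")
      case True
      then show ?thesis using zero_in_component[OF g] H.hom_zero by auto
    next
      case False
      then show ?thesis using c_in g unfolding quot_grading_def by blast
    qed
  qed
  from bchoice[OF this] obtain a
    where a: "\<forall>g\<in>carrier G. a g \<in> A g \<and> proj (a g) = c g \<and> (c g = \<zero>\<^bsub>R Quot I\<^esub> \<longrightarrow> a g = \<zero>)"
    by blast
  define a' where "a' = restrict a (carrier G)"
  have a'_in: "a' g \<in> A g" and proj_a': "proj (a' g) = c g" if "g \<in> carrier G" for g
    using a that unfolding a'_def by simp_all
  have a'_closed: "a' g \<in> carrier R" if "g \<in> carrier G" for g
    using a'_in[OF that] component_subset[OF that] by blast
  define y where "y = (\<Oplus>g\<in>?supp. a' g)"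
  have "gdecomp G R A y a'"
  proof (rule gdecompI[where F = ?supp])
    show "a' \<in> extensional (carrier G)" unfolding a'_def by (rule restrict_extensional)
    show "\<And>g. g \<in> carrier G \<Longrightarrow> g \<notin> ?supp \<Longrightarrow> a' g = \<zero>" using a unfolding a'_def by simp
  qed (use a'_in fin y_def in auto)
  moreover have "proj y = (\<Oplus>\<^bsub>R Quot I\<^esub>g\<in>?supp. proj (a' g))"
    unfolding y_def using H.hom_finsum[of a' ?supp] a'_closed by (simp add: comp_def)
  moreover have "\<dots> = \<xi>"
    unfolding c_sum using proj_a' c_closed by (intro H.S.finsum_cong') auto
  ultimately have "gdecomp G R A y a'" "proj y = \<xi>" "\<forall>g\<in>carrier G. proj (a' g) = c g"
    using proj_a' by simp_all
  then show ?thesis by blast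
qed

text \<open>If \<open>proj y = proj x\<close> with \<open>y\<close> lifting the decomposition, then \<open>x - y \<in> I\<close>, and since
  \<open>I\<close> is graded the components of \<open>x\<close> and \<open>y\<close> agree modulo \<open>I\<close>.\<close>

lemma gdecomp_quot_unique:
  assumes x: "x \<in> carrier R" and c: "gdecomp G (R Quot I) quot_grading (proj x) c"
  shows "c = restrict (\<lambda>g. proj (gcomp G R A x g)) (carrier G)"
proof -
  obtain y a where ya: "gdecomp G R A y a" "proj y = proj x" "\<forall>g\<in>carrier G. proj (a g) = c g"
    using gdecomp_quot_lift[OF c] by blast
  have y: "y \<in> carrier R" using gdecomp_imp_carrier[OF ya(1)] .
  have gcomp_y: "gcomp G R A y = a" using gcomp_eqI[OF ya(1)] .
  define z where "z = \<ominus> y \<oplus> x"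
  have z_closed: "z \<in> carrier R" unfolding z_def using x y by simp
  have yz: "y \<oplus> z = x" unfolding z_def using x y by (simp add: a_assoc[symmetric] r_neg)
  have "proj z = \<ominus>\<^bsub>R Quot I\<^esub> proj y \<oplus>\<^bsub>R Quot I\<^esub> proj y"
    unfolding z_def using x y ya(2) by simp
  also have "\<dots> = \<zero>\<^bsub>R Quot I\<^esub>" using y by (simp add: H.S.l_neg)
  finally have z: "z \<in> I" using z_closed by (intro proj_eq_zero_imp_mem)
  have c_ext: "c \<in> extensional (carrier G)" using c unfolding gdecomp_def by (elim conjE)
  have c_closed: "c g \<in> carrier (R Quot I)" if "g \<in> carrier G" for g
    using c Q.component_subset that unfolding gdecomp_def by blast
  show ?thesis
  proof (rule extensionalityI[OF c_ext restrict_extensional])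
    fix g assume g: "g \<in> carrier G"
    have "gcomp G R A x g = a g \<oplus> gcomp G R A z g"
      using gcomp_add[OF y z_closed g] gcomp_y yz by simp
    moreover have "proj (gcomp G R A z g) = \<zero>\<^bsub>R Quot I\<^esub>"
      using proj_eq_zero graded_ideal_gcomp[OF graded_ideal_I z g] by blast
    moreover have "a g \<in> carrier R" using gcomp_y gcomp_closed[OF y g] by simp
    ultimately have "proj (gcomp G R A x g) = c g"
      using ya(3) g gcomp_closed[OF z_closed g] c_closed[OF g] by simp
    then show "c g = restrict (\<lambda>g. proj (gcomp G R A x g)) (carrier G) g" using g by simp
  qed
qed

lemma direct_sum_decomp_quot: "direct_sum_decomp G (R Quot I) quot_grading"
  unfolding direct_sum_decomp_def
proof (intro conjI ballI)
  show "subgroup (quot_grading g) (add_monoid (R Quot I))" if "g \<in> carrier G" for g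
    using Q.component_subgroup that .
  fix \<xi> assume "\<xi> \<in> carrier (R Quot I)"
  then obtain x where x: "x \<in> carrier R" "\<xi> = proj x" unfolding carrier_quot by blast
  show "\<exists>!c. gdecomp G (R Quot I) quot_grading \<xi> c"
    unfolding x(2) using gdecomp_quot[OF x(1)] gdecomp_quot_unique[OF x(1)] by (rule ex1I)
qed

lemma quot_grading_mult:
  assumes gh: "g \<in> carrier G" "h \<in> carrier G" and ab: "a \<in> quot_grading g" "b \<in> quot_grading h"
  shows "a \<otimes>\<^bsub>R Quot I\<^esub> b \<in> quot_grading (g \<otimes>\<^bsub>G\<^esub> h)"
proof -
  obtain a' b' where a': "a' \<in> A g" "a = proj a'" and b': "b' \<in> A h" "b = proj b'"
    using ab unfolding quot_grading_def by blast
  have "a' \<in> carrier R" "b' \<in> carrier R" using component_subset gh a'(1) b'(1) by blast+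
  then have "a \<otimes>\<^bsub>R Quot I\<^esub> b = proj (a' \<otimes> b')" using a'(2) b'(2) by simp
  then show ?thesis unfolding quot_grading_def using mult_component[OF gh a'(1) b'(1)] by blast
qed

lemma graded_ring_quot: "graded_ring G (R Quot I) quot_grading"
  unfolding graded_ring_def
  using G.is_group H.S.is_cring direct_sum_decomp_quot quot_grading_mult by blast

sublocale RQ: graded_cring G "R Quot I" quot_grading by (rule graded_cring.intro[OF graded_ring_quot])

lemma gcomp_quot:
  "x \<in> carrier R \<Longrightarrow> g \<in> carrier G \<Longrightarrow> gcomp G (R Quot I) quot_grading (proj x) g = proj (gcomp G R A x g)"
  using RQ.gcomp_eqI[OF gdecomp_quot] by simp

lemma homog_quot: "homog G quot_grading = proj ` homog G A"
  unfolding homog_def quot_grading_def by blast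

lemma Spec_g_quot_image:
  assumes p: "p \<in> Spec_g G R A" "I \<subseteq> p"
  shows "proj ` p \<in> Spec_g G (R Quot I) quot_grading"
proof (rule RQ.Spec_gI)
  have p_ideal: "ideal p R" using Spec_g_ideal[OF p(1)] .
  note mem_iff = proj_mem_image_iff[OF p_ideal p(2)]
  have "gcomp G (R Quot I) quot_grading \<xi> g \<in> proj ` p"
    if \<xi>: "\<xi> \<in> proj ` p" and g: "g \<in> carrier G" for \<xi> g
  proof -
    obtain x where x: "x \<in> p" "\<xi> = proj x" using \<xi> by blast
    then have "x \<in> carrier R" using Spec_g_subset[OF p(1)] by blast
    then show ?thesis
      using gcomp_quot g x graded_ideal_gcomp[OF Spec_g_graded_ideal[OF p(1)]] by simp
  qed
  then show "graded_ideal G (R Quot I) quot_grading (proj ` p)"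
    unfolding graded_ideal_def using ring_ideal_imp_quot_ideal[OF I.ideal_axioms p_ideal] by blast
  show "\<one>\<^bsub>R Quot I\<^esub> \<notin> proj ` p"
    using mem_iff[of \<one>] H.hom_one one_notin_Spec_g[OF p(1)] by simp
  fix \<alpha> \<beta> assume "\<alpha> \<in> homog G quot_grading" "\<beta> \<in> homog G quot_grading"
    and \<alpha>\<beta>: "\<alpha> \<otimes>\<^bsub>R Quot I\<^esub> \<beta> \<in> proj ` p"
  then obtain a b where a: "a \<in> homog G A" "\<alpha> = proj a" and b: "b \<in> homog G A" "\<beta> = proj b"
    unfolding homog_quot by blast
  then have "a \<otimes> b \<in> p"
    using \<alpha>\<beta> mem_iff[of "a \<otimes> b"] homog_closed by simp
  then show "\<alpha> \<in> proj ` p \<or> \<beta> \<in> proj ` p" using Spec_g_prime[OF p(1) a(1) b(1)] a b by blast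
qed

lemma Spec_g_quot_preimage:
  assumes P: "P \<in> Spec_g G (R Quot I) quot_grading"
  shows "{x \<in> carrier R. proj x \<in> P} \<in> zero_locus I" and "proj ` {x \<in> carrier R. proj x \<in> P} = P"
proof -
  let ?p = "{x \<in> carrier R. proj x \<in> P}"
  have P_ideal: "ideal P (R Quot I)" using RQ.Spec_g_ideal[OF P] .
  show "proj ` ?p = P"
  proof (intro equalityI subsetI)
    fix \<xi> assume "\<xi> \<in> P"
    moreover obtain x where "x \<in> carrier R" "\<xi> = proj x"
      using RQ.Spec_g_subset[OF P] \<open>\<xi> \<in> P\<close> unfolding carrier_quot by blast
    ultimately show "\<xi> \<in> proj ` ?p" by blast
  qed blast
  have p_ideal: "ideal ?p R"
    using ring_hom_ring.ideal_vimage[OF I.rcos_ring_hom_ring P_ideal] .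
  have "gcomp G R A x g \<in> ?p" if x: "x \<in> ?p" and g: "g \<in> carrier G" for x g
  proof -
    have xc: "x \<in> carrier R" "proj x \<in> P" using x by simp_all
    then have "gcomp G (R Quot I) quot_grading (proj x) g \<in> P"
      using RQ.graded_ideal_gcomp[OF RQ.Spec_g_graded_ideal[OF P]] g by blast
    then show ?thesis using gcomp_quot[OF xc(1) g] gcomp_closed[OF xc(1) g] by simp
  qed
  then have "graded_ideal G R A ?p" unfolding graded_ideal_def using p_ideal by blast
  moreover have "\<one> \<notin> ?p" using RQ.one_notin_Spec_g[OF P] H.hom_one by simp
  moreover have "a \<in> ?p \<or> b \<in> ?p"
    if a: "a \<in> homog G A" and b: "b \<in> homog G A" and ab: "a \<otimes> b \<in> ?p" for a b
  proof -
    have "proj a \<in> homog G quot_grading" "proj b \<in> homog G quot_grading"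
      unfolding homog_quot using a b by blast+
    moreover have "proj a \<otimes>\<^bsub>R Quot I\<^esub> proj b \<in> P"
      using ab homog_closed[OF a] homog_closed[OF b] by simp
    ultimately have "proj a \<in> P \<or> proj b \<in> P" using RQ.Spec_g_prime[OF P] by blast
    then show ?thesis using homog_closed[OF a] homog_closed[OF b] by blast
  qed
  ultimately have "?p \<in> Spec_g G R A" by (rule Spec_gI)
  moreover have "I \<subseteq> ?p"
  proof
    fix x assume x: "x \<in> I"
    have "\<zero>\<^bsub>R Quot I\<^esub> \<in> P" by (rule additive_subgroup.zero_closed[OF ideal.axioms(1)[OF P_ideal]])
    then show "x \<in> ?p" using proj_eq_zero[OF x] I.Icarr[OF x] by simp
  qed
  ultimately show "?p \<in> zero_locus I" by simp
qed

lemma bij_betw_Spec_g_quot: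
  "bij_betw (\<lambda>p. proj ` p) (zero_locus I) (Spec_g G (R Quot I) quot_grading)"
proof (rule bij_betw_byWitness[where f' = "\<lambda>P. {x \<in> carrier R. proj x \<in> P}"])
  show "\<forall>p\<in>zero_locus I. {x \<in> carrier R. proj x \<in> proj ` p} = p"
  proof
    fix p assume "p \<in> zero_locus I"
    then have p: "p \<in> Spec_g G R A" "I \<subseteq> p" by simp_all
    note iff = proj_mem_image_iff[OF Spec_g_ideal[OF p(1)] p(2)]
    show "{x \<in> carrier R. proj x \<in> proj ` p} = p"
    proof (intro equalityI subsetI)
      fix x assume "x \<in> {x \<in> carrier R. proj x \<in> proj ` p}"
      then show "x \<in> p" using iff by blast
    next
      fix x assume "x \<in> p"
      then show "x \<in> {x \<in> carrier R. proj x \<in> proj ` p}" using Spec_g_subset[OF p(1)] by blast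
    qed
  qed
  show "\<forall>P\<in>Spec_g G (R Quot I) quot_grading. proj ` {x \<in> carrier R. proj x \<in> P} = P"
    using Spec_g_quot_preimage(2) by blast
  show "(\<lambda>p. proj ` p) ` zero_locus I \<subseteq> Spec_g G (R Quot I) quot_grading"
    using Spec_g_quot_image by auto
  show "(\<lambda>P. {x \<in> carrier R. proj x \<in> P}) ` Spec_g G (R Quot I) quot_grading \<subseteq> zero_locus I"
    using Spec_g_quot_preimage(1) by blast
qed

end

section \<open>Graded modules and quasi-primary submodules\<close>

locale graded_cring_module = graded_cring G R A
  for G :: "'g monoid" and R :: "'a ring" (structure) and A +
  fixes M :: "('a, 'b) module" and B :: "'g \<Rightarrow> 'b set"
  assumes graded_module: "graded_module G R A M B"
begin

sublocale module R M using graded_module unfolding graded_module_def by auto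

lemma graded_abelian_group_module: "graded_abelian_group G M B"
  using graded_module unfolding graded_module_def
  by (auto intro!: graded_abelian_groupI M.abelian_group_axioms)

sublocale M: graded_abelian_group G M B by (rule graded_abelian_group_module)

lemma smult_component:
  "g \<in> carrier G \<Longrightarrow> h \<in> carrier G \<Longrightarrow> a \<in> A g \<Longrightarrow> m \<in> B h \<Longrightarrow> a \<odot>\<^bsub>M\<^esub> m \<in> B (g \<otimes>\<^bsub>G\<^esub> h)"
  using graded_module unfolding graded_module_def by blast

lemma homogM_closed: "m \<in> homog G B \<Longrightarrow> m \<in> carrier M"
  unfolding homog_def using M.component_subset by blast

lemma smult_homog: "a \<in> homog G A \<Longrightarrow> m \<in> homog G B \<Longrightarrow> a \<odot>\<^bsub>M\<^esub> m \<in> homog G B"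
  unfolding homog_def using smult_component G.m_closed by blast

lemma finsum_smult_rdistr:
  assumes "finite F" "f \<in> F \<rightarrow> carrier R" "m \<in> carrier M"
  shows "(\<Oplus>i\<in>F. f i) \<odot>\<^bsub>M\<^esub> m = (\<Oplus>\<^bsub>M\<^esub>i\<in>F. f i \<odot>\<^bsub>M\<^esub> m)"
  using assms
proof (induct F rule: finite_induct)
  case (insert a F)
  then have fa: "f a \<in> carrier R" and fF: "f \<in> F \<rightarrow> carrier R" by auto
  have "(\<Oplus>\<^bsub>M\<^esub>i\<in>insert a F. f i \<odot>\<^bsub>M\<^esub> m) = f a \<odot>\<^bsub>M\<^esub> m \<oplus>\<^bsub>M\<^esub> (\<Oplus>\<^bsub>M\<^esub>i\<in>F. f i \<odot>\<^bsub>M\<^esub> m)"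
    using insert fa fF by (intro M.finsum_insert) auto
  then show ?case using insert fa fF by (simp add: finsum_insert smult_l_distr finsum_closed)
qed simp

lemma gcomp_smult_component:
  assumes "x \<in> carrier R" "h \<in> carrier G" "m \<in> B h" "g \<in> carrier G"
  shows "gcomp G M B (x \<odot>\<^bsub>M\<^esub> m) (g \<otimes>\<^bsub>G\<^esub> h) = gcomp G R A x g \<odot>\<^bsub>M\<^esub> m"
proof (rule gcomp_degree_shift[OF graded_abelian_group_module, where f = "\<lambda>x. x \<odot>\<^bsub>M\<^esub> m"])
  have "m \<in> carrier M" using assms M.component_subset by blast
  then show "\<And>(F :: 'g set) c. finite F \<Longrightarrow> c \<in> F \<rightarrow> carrier R \<Longrightarrow>
      (\<Oplus>i\<in>F. c i) \<odot>\<^bsub>M\<^esub> m = (\<Oplus>\<^bsub>M\<^esub>i\<in>F. c i \<odot>\<^bsub>M\<^esub> m)"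
    by (simp add: finsum_smult_rdistr)
qed (use assms smult_component in auto)

lemma graded_submodule_imp_submodule: "graded_submodule G R M B K \<Longrightarrow> submodule K R M"
  unfolding graded_submodule_def by blast

lemma graded_submodule_gcomp:
  "graded_submodule G R M B K \<Longrightarrow> x \<in> K \<Longrightarrow> g \<in> carrier G \<Longrightarrow> gcomp G M B x g \<in> K"
  unfolding graded_submodule_def by blast

lemma graded_submodule_Inter:
  assumes "\<And>P. P \<in> C \<Longrightarrow> graded_submodule G R M B P"
  shows "graded_submodule G R M B (carrier M \<inter> \<Inter>C)"
  unfolding graded_submodule_def
proof (intro conjI ballI)
  have sub: "\<And>P. P \<in> C \<Longrightarrow> submodule P R M"
    using assms graded_submodule_imp_submodule by blast
  show "submodule (carrier M \<inter> \<Inter>C) R M"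
  proof (rule submoduleI)
    show "\<zero>\<^bsub>M\<^esub> \<in> carrier M \<inter> \<Inter>C"
      using sub submodule.axioms(1) subgroup.one_closed by fastforce
    show "\<And>a. a \<in> carrier M \<inter> \<Inter>C \<Longrightarrow> \<ominus>\<^bsub>M\<^esub> a \<in> carrier M \<inter> \<Inter>C"
      using sub submoduleE(3) by fastforce
    show "\<And>a b. a \<in> carrier M \<inter> \<Inter>C \<Longrightarrow> b \<in> carrier M \<inter> \<Inter>C \<Longrightarrow> a \<oplus>\<^bsub>M\<^esub> b \<in> carrier M \<inter> \<Inter>C"
      using sub submoduleE(5) by fastforce
    show "\<And>a x. a \<in> carrier R \<Longrightarrow> x \<in> carrier M \<inter> \<Inter>C \<Longrightarrow> a \<odot>\<^bsub>M\<^esub> x \<in> carrier M \<inter> \<Inter>C"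
      using sub submoduleE(4) by fastforce
  qed blast
  fix x g assume "x \<in> carrier M \<inter> \<Inter>C" "g \<in> carrier G"
  then show "gcomp G M B x g \<in> carrier M \<inter> \<Inter>C"
    using M.gcomp_closed graded_submodule_gcomp[OF assms] by blast
qed

lemma colon_subset: "colon R M K \<subseteq> carrier R"
  unfolding colon_def by blast

lemma colon_mono: "K \<subseteq> L \<Longrightarrow> colon R M K \<subseteq> colon R M L"
  unfolding colon_def by blast

lemma colon_Inter: "colon R M (carrier M \<inter> \<Inter>C) = {r \<in> carrier R. \<forall>P\<in>C. r \<in> colon R M P}"
  unfolding colon_def by auto

lemma ideal_colon:
  assumes K: "submodule K R M"
  shows "ideal (colon R M K) R"
proof (rule ideal_closedI)
  show "\<zero> \<in> colon R M K" unfolding colon_def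
    using K submodule.axioms(1) subgroup.one_closed by fastforce
  show "\<And>a b. a \<in> colon R M K \<Longrightarrow> b \<in> colon R M K \<Longrightarrow> a \<oplus> b \<in> colon R M K"
    unfolding colon_def using smult_l_distr submoduleE(5)[OF K] by auto
  show "\<And>a. a \<in> colon R M K \<Longrightarrow> \<ominus> a \<in> colon R M K"
    unfolding colon_def using smult_l_minus submoduleE(3)[OF K] by auto
  show "\<And>a x. a \<in> colon R M K \<Longrightarrow> x \<in> carrier R \<Longrightarrow> x \<otimes> a \<in> colon R M K"
    unfolding colon_def using smult_assoc1 submoduleE(4)[OF K] by auto
qed (rule colon_subset)

lemma colon_by_homog:
  assumes K: "submodule K R M" and r: "r \<in> carrier R"
    and homog: "\<And>m. m \<in> homog G B \<Longrightarrow> r \<odot>\<^bsub>M\<^esub> m \<in> K"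
  shows "r \<in> colon R M K"
  unfolding colon_def
proof (intro CollectI conjI ballI r)
  fix m assume m: "m \<in> carrier M"
  let ?supp = "{g \<in> carrier G. gcomp G M B m g \<noteq> \<zero>\<^bsub>M\<^esub>}"
  have "r \<odot>\<^bsub>M\<^esub> m = r \<odot>\<^bsub>M\<^esub> (\<Oplus>\<^bsub>M\<^esub>g\<in>?supp. gcomp G M B m g)"
    using M.finsum_gcomp[OF m] by simp
  also have "\<dots> = (\<Oplus>\<^bsub>M\<^esub>g\<in>?supp. r \<odot>\<^bsub>M\<^esub> gcomp G M B m g)"
    by (rule finsum_smult_ldistr) (use M.finite_gcomp_support[OF m] r M.gcomp_closed[OF m] in auto)
  also have "\<dots> \<in> K"
  proof (rule M.finsum_closed_in_subset)
    show "\<zero>\<^bsub>M\<^esub> \<in> K" using K submodule.axioms(1) subgroup.one_closed by fastforce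
    show "\<And>i. i \<in> ?supp \<Longrightarrow> r \<odot>\<^bsub>M\<^esub> gcomp G M B m i \<in> K"
      using homog M.gcomp_in_component[OF m] unfolding homog_def by blast
  qed (use M.finite_gcomp_support[OF m] submoduleE(1,5)[OF K] in auto)
  finally show "r \<odot>\<^bsub>M\<^esub> m \<in> K" .
qed

lemma graded_ideal_colon:
  assumes K: "graded_submodule G R M B K"
  shows "graded_ideal G R A (colon R M K)"
  unfolding graded_ideal_def
proof (intro conjI ballI)
  have K': "submodule K R M" using K graded_submodule_imp_submodule by blast
  show "ideal (colon R M K) R" using ideal_colon[OF K'] .
  fix r g assume r: "r \<in> colon R M K" and g: "g \<in> carrier G"
  have rc: "r \<in> carrier R" using r colon_subset by blast
  show "gcomp G R A r g \<in> colon R M K"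
  proof (rule colon_by_homog[OF K' gcomp_closed[OF rc g]])
    fix m assume "m \<in> homog G B"
    then obtain h where h: "h \<in> carrier G" "m \<in> B h" unfolding homog_def by blast
    then have "r \<odot>\<^bsub>M\<^esub> m \<in> K" using r M.component_subset unfolding colon_def by blast
    then have "gcomp G M B (r \<odot>\<^bsub>M\<^esub> m) (g \<otimes>\<^bsub>G\<^esub> h) \<in> K"
      using graded_submodule_gcomp[OF K] g h by simp
    then show "gcomp G R A r g \<odot>\<^bsub>M\<^esub> m \<in> K" using gcomp_smult_component[OF rc h g] by simp
  qed
qed

lemma colon_proper:
  assumes "graded_submodule G R M B K" "K \<noteq> carrier M"
  shows "\<one> \<notin> colon R M K"
  using assms submoduleE(1) graded_submodule_imp_submodule unfolding colon_def by fastforce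

lemma ann_subset_colon: "\<zero>\<^bsub>M\<^esub> \<in> K \<Longrightarrow> ann R M \<subseteq> colon R M K"
  unfolding ann_def colon_def by auto

lemma graded_submodule_zero: "graded_submodule G R M B K \<Longrightarrow> \<zero>\<^bsub>M\<^esub> \<in> K"
  using graded_submodule_imp_submodule submodule.axioms(1) subgroup.one_closed by fastforce

lemma graded_ideal_ann: "graded_ideal G R A (ann R M)"
proof -
  have "graded_submodule G R M B {\<zero>\<^bsub>M\<^esub>}"
    unfolding graded_submodule_def using M.gcomp_zero by (auto intro: submoduleI)
  then show ?thesis unfolding ann_def by (rule graded_ideal_colon)
qed

lemma colon_graded_prime_submodule:
  assumes P: "graded_prime_submodule G R A M B P"
  shows "colon R M P \<in> Spec_g G R A"
proof (rule Spec_gI)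
  have P': "graded_submodule G R M B P" "P \<noteq> carrier M"
    using P unfolding graded_prime_submodule_def by auto
  then show "graded_ideal G R A (colon R M P)" "\<one> \<notin> colon R M P"
    using graded_ideal_colon colon_proper by blast+
  fix a b assume a: "a \<in> homog G A" and b: "b \<in> homog G A" and ab: "a \<otimes> b \<in> colon R M P"
  show "a \<in> colon R M P \<or> b \<in> colon R M P"
  proof (rule disjCI)
    assume "b \<notin> colon R M P"
    then obtain m where m: "m \<in> homog G B" "b \<odot>\<^bsub>M\<^esub> m \<notin> P"
      using colon_by_homog[OF graded_submodule_imp_submodule[OF P'(1)] homog_closed[OF b]] by blast
    have "(a \<otimes> b) \<odot>\<^bsub>M\<^esub> m \<in> P" using ab homogM_closed[OF m(1)] unfolding colon_def by blast
    then have "a \<odot>\<^bsub>M\<^esub> (b \<odot>\<^bsub>M\<^esub> m) \<in> P"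
      using smult_assoc1 homog_closed a b homogM_closed[OF m(1)] by simp
    then show "a \<in> colon R M P"
      using P m smult_homog[OF b m(1)] a unfolding graded_prime_submodule_def by blast
  qed
qed

abbreviation rad_colon :: "'b set \<Rightarrow> 'a set" where
  "rad_colon K \<equiv> gr_radical G R A (colon R M K)"

lemma graded_submodule_GrM: "graded_submodule G R M B (GrM G R A M B K)"
  unfolding GrM_def
  by (rule graded_submodule_Inter) (auto simp: graded_prime_submodule_def)

lemma colon_GrM_eq:
  "colon R M (GrM G R A M B K)
     = {r \<in> carrier R. \<forall>P. graded_prime_submodule G R A M B P \<and> K \<subseteq> P \<longrightarrow> r \<in> colon R M P}"
  unfolding GrM_def colon_Inter by blast

lemma
  assumes "Q \<in> qpSpec G R A M B"
  shows qpSpec_graded_submodule: "graded_submodule G R M B Q"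
    and qpSpec_proper: "Q \<noteq> carrier M"
    and qpSpec_quasi_primary: "\<And>r m. r \<in> homog G A \<Longrightarrow> m \<in> homog G B \<Longrightarrow> r \<odot>\<^bsub>M\<^esub> m \<in> Q \<Longrightarrow>
      r \<in> rad_colon Q \<or> m \<in> GrM G R A M B Q"
    and qpSpec_primeful: "\<And>p. p \<in> Spec_g G R A \<Longrightarrow> colon R M Q \<subseteq> p \<Longrightarrow>
      \<exists>P. graded_prime_submodule G R A M B P \<and> Q \<subseteq> P \<and> colon R M P = p"
  using assms unfolding qpSpec_def graded_qp_submodule_def graded_primeful_def Spec_g_def by blast+

lemma graded_ideal_colon_qpSpec: "Q \<in> qpSpec G R A M B \<Longrightarrow> graded_ideal G R A (colon R M Q)"
  using graded_ideal_colon qpSpec_graded_submodule by blast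

text \<open>By the primeful property the graded primes over \<open>(Q : M)\<close> are exactly the colons of
  the graded prime submodules over \<open>Q\<close>; hence \<open>(Gr\<^sub>M(Q) : M) = Gr((Q : M))\<close>.\<close>

lemma colon_GrM_qpSpec:
  assumes Q: "Q \<in> qpSpec G R A M B"
  shows "colon R M (GrM G R A M B Q) = rad_colon Q"
  unfolding colon_GrM_eq gr_radical_eq[OF graded_ideal_colon_qpSpec[OF Q]]
proof (intro Collect_cong conj_cong refl iffI allI impI ballI)
  fix x p assume "\<forall>P. graded_prime_submodule G R A M B P \<and> Q \<subseteq> P \<longrightarrow> x \<in> colon R M P"
    "p \<in> Spec_g G R A" "colon R M Q \<subseteq> p"
  then show "x \<in> p" using qpSpec_primeful[OF Q] by blast
next
  fix x P assume "\<forall>p\<in>Spec_g G R A. colon R M Q \<subseteq> p \<longrightarrow> x \<in> p"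
    "graded_prime_submodule G R A M B P \<and> Q \<subseteq> P"
  then show "x \<in> colon R M P" using colon_graded_prime_submodule colon_mono by blast
qed

lemma rad_colon_qpSpec_Spec_g:
  assumes Q: "Q \<in> qpSpec G R A M B"
  shows "rad_colon Q \<in> Spec_g G R A"
proof (rule Spec_gI)
  have I: "graded_ideal G R A (colon R M Q)" using graded_ideal_colon_qpSpec[OF Q] .
  have "\<one> \<notin> colon R M Q" using colon_proper qpSpec_graded_submodule qpSpec_proper Q by blast
  then have "colon R M Q \<noteq> carrier R" by blast
  then show "graded_ideal G R A (rad_colon Q)" "\<one> \<notin> rad_colon Q"
    using graded_ideal_gr_radical[OF I] gr_radical_proper[OF I]
      graded_ideal_imp_ideal ideal.one_imp_carrier by blast+
  fix a b assume a: "a \<in> homog G A" and b: "b \<in> homog G A" and ab: "a \<otimes> b \<in> rad_colon Q"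
  show "a \<in> rad_colon Q \<or> b \<in> rad_colon Q"
  proof (cases "a \<in> rad_colon Q")
    case na: False
    obtain n where n: "(a \<otimes> b) [^] (n::nat) \<in> colon R M Q"
      using gr_radical_homogD[OF homog_mult[OF a b] ab] by blast
    have an: "a [^] n \<notin> rad_colon Q" using gr_radical_homog_pow_mem[OF I a] na by blast
    have "b [^] n \<odot>\<^bsub>M\<^esub> m \<in> GrM G R A M B Q" if m: "m \<in> homog G B" for m
    proof -
      have "(a \<otimes> b) [^] n \<odot>\<^bsub>M\<^esub> m \<in> Q" using n homogM_closed[OF m] unfolding colon_def by blast
      then have "a [^] n \<odot>\<^bsub>M\<^esub> (b [^] n \<odot>\<^bsub>M\<^esub> m) \<in> Q"
        using homog_closed a b homogM_closed[OF m] by (simp add: nat_pow_distrib smult_assoc1)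
      then show ?thesis
        using qpSpec_quasi_primary[OF Q homog_pow[OF a] smult_homog[OF homog_pow[OF b] m]] an by blast
    qed
    then have "b [^] n \<in> colon R M (GrM G R A M B Q)"
      using colon_by_homog graded_submodule_imp_submodule[OF graded_submodule_GrM] homog_closed[OF b]
      by simp
    then show ?thesis
      using colon_GrM_qpSpec[OF Q] gr_radical_homog_pow_mem[OF I b] by simp
  qed simp
qed

lemma ann_subset_rad_colon: "Q \<in> qpSpec G R A M B \<Longrightarrow> ann R M \<subseteq> rad_colon Q"
  using ann_subset_colon graded_submodule_zero qpSpec_graded_submodule
    graded_ideal_subset_gr_radical graded_ideal_colon_qpSpec by (metis subset_trans)

lemma qpV_qpSpec: "Q \<in> qpSpec G R A M B \<Longrightarrow> Q \<in> qpV G R A M B Q"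
  unfolding qpV_def by blast

lemma qpV_eq_iff:
  assumes "P \<in> qpSpec G R A M B" "Q \<in> qpSpec G R A M B"
  shows "qpV G R A M B P = qpV G R A M B Q \<longleftrightarrow> rad_colon P = rad_colon Q"
  using assms qpV_qpSpec unfolding qpV_def by blast

text \<open>Used to realise every set \<open>{Q. J \<subseteq> Gr((Q : M))}\<close> as a closed set \<open>qp-V(K)\<close>; the
  primeful property provides, for each \<open>Q\<close>, a graded prime submodule over \<open>Q\<close> whose colon is
  \<open>Gr((Q : M))\<close>.\<close>

definition prime_submodule_meet :: "'a set \<Rightarrow> 'b set" where
  "prime_submodule_meet J = carrier M \<inter> \<Inter>{P. graded_prime_submodule G R A M B P \<and> J \<subseteq> colon R M P}"

lemma graded_submodule_prime_submodule_meet: "graded_submodule G R M B (prime_submodule_meet J)"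
  unfolding prime_submodule_meet_def
  by (rule graded_submodule_Inter) (auto simp: graded_prime_submodule_def)

lemma qpV_prime_submodule_meet:
  assumes J: "J \<subseteq> carrier R"
  shows "qpV G R A M B (prime_submodule_meet J) = {Q \<in> qpSpec G R A M B. J \<subseteq> rad_colon Q}"
  unfolding qpV_def
proof (intro Collect_cong conj_cong refl iffI)
  fix Q assume Q: "Q \<in> qpSpec G R A M B"
  have K: "graded_ideal G R A (colon R M (prime_submodule_meet J))"
    using graded_ideal_colon[OF graded_submodule_prime_submodule_meet] .
  have "J \<subseteq> colon R M (prime_submodule_meet J)"
    using J unfolding prime_submodule_meet_def colon_Inter by blast
  then show "rad_colon (prime_submodule_meet J) \<subseteq> rad_colon Q \<Longrightarrow> J \<subseteq> rad_colon Q"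
    using graded_ideal_subset_gr_radical[OF K] by blast
  assume JQ: "J \<subseteq> rad_colon Q"
  obtain P where P: "graded_prime_submodule G R A M B P" "Q \<subseteq> P" "colon R M P = rad_colon Q"
    using qpSpec_primeful[OF Q rad_colon_qpSpec_Spec_g[OF Q]]
      graded_ideal_subset_gr_radical[OF graded_ideal_colon_qpSpec[OF Q]] by blast
  then have "prime_submodule_meet J \<subseteq> P" using JQ unfolding prime_submodule_meet_def by blast
  then have "colon R M (prime_submodule_meet J) \<subseteq> rad_colon Q" using colon_mono P(3) by blast
  then show "rad_colon (prime_submodule_meet J) \<subseteq> rad_colon Q"
    using gr_radical_subset_Spec_g[OF K rad_colon_qpSpec_Spec_g[OF Q]] by blast
qed

end

section \<open>The quasi-Zariski topology\<close>

lemma inj_on_iff_card_fibres_le_one: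
  assumes "f ` S \<subseteq> T"
  shows "inj_on f S \<longleftrightarrow> (\<forall>y\<in>T. finite {x \<in> S. f x = y} \<and> card {x \<in> S. f x = y} \<le> 1)"
proof
  assume inj: "inj_on f S"
  have "finite {x \<in> S. f x = y} \<and> card {x \<in> S. f x = y} \<le> 1" for y
  proof (cases "\<exists>x\<in>S. f x = y")
    case True
    then obtain x where "x \<in> S" "f x = y" by blast
    then have "{x \<in> S. f x = y} = {x}" using inj_onD[OF inj] by blast
    then show ?thesis by simp
  next
    case False
    then have "{x \<in> S. f x = y} = {}" by blast
    then show ?thesis by (simp only:) simp
  qed
  then show "\<forall>y\<in>T. finite {x \<in> S. f x = y} \<and> card {x \<in> S. f x = y} \<le> 1" by blast
next
  assume fibres: "\<forall>y\<in>T. finite {x \<in> S. f x = y} \<and> card {x \<in> S. f x = y} \<le> 1"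
  show "inj_on f S"
  proof (rule inj_onI)
    fix x x' assume x: "x \<in> S" "x' \<in> S" "f x = f x'"
    have "f x \<in> T" using assms x(1) by blast
    then have "finite {z \<in> S. f z = f x}" "card {z \<in> S. f z = f x} \<le> 1" using fibres by blast+
    moreover have "x \<in> {z \<in> S. f z = f x}" "x' \<in> {z \<in> S. f z = f x}" using x by simp_all
    ultimately show "x = x'" using card_le_Suc0_iff_eq[of "{z \<in> S. f z = f x}"] by simp
  qed
qed

context graded_cring_module
begin

sublocale Ann: graded_quotient G R A "ann R M"
  by (rule graded_quotient.intro[OF graded_cring_axioms graded_quotient_axioms.intro[OF graded_ideal_ann]])

lemma Rbar_eq: "Rbar R M = R Quot ann R M"
  unfolding Rbar_def ..

lemma Abar_eq: "Abar R M A = Ann.quot_grading"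
  unfolding Abar_def Ann.quot_grading_def ..

lemma rad_colon_qpSpec_zero_locus_ann: "Q \<in> qpSpec G R A M B \<Longrightarrow> rad_colon Q \<in> zero_locus (ann R M)"
  using rad_colon_qpSpec_Spec_g ann_subset_rad_colon by simp

lemma phi_map_eq: "Q \<in> qpSpec G R A M B \<Longrightarrow> phi_map G R A M B Q = Ann.proj ` rad_colon Q"
  unfolding phi_map_def using colon_GrM_qpSpec by simp

text \<open>Surjectivity of \<open>\<psi>\<^sup>q\<close> forces every graded prime over \<open>Ann(M)\<close> to be of the form
  \<open>Gr((Q : M))\<close>: graded primes of \<open>R/Ann(M)\<close> are quasi-primary, hence of the form
  \<open>(Q : M)/Ann(M)\<close>, and then \<open>(Q : M)\<close> is already prime.\<close>

lemma rad_colon_image_qpSpec: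
  assumes psi_surj: "qpSpec_ring G (Rbar R M) (Abar R M A) \<subseteq> psi_q R M ` qpSpec G R A M B"
  shows "rad_colon ` qpSpec G R A M B = zero_locus (ann R M)"
proof (intro equalityI subsetI)
  fix p assume "p \<in> zero_locus (ann R M)"
  then have p: "p \<in> Spec_g G R A" "ann R M \<subseteq> p" by simp_all
  have "Ann.proj ` p \<in> Spec_g G (R Quot ann R M) Ann.quot_grading"
    by (rule Ann.Spec_g_quot_image[OF p])
  then have "Ann.proj ` p \<in> psi_q R M ` qpSpec G R A M B"
    using Ann.RQ.Spec_g_subset_qpSpec_ring psi_surj unfolding Rbar_eq Abar_eq by blast
  then obtain Q where Q: "Q \<in> qpSpec G R A M B" "Ann.proj ` p = Ann.proj ` colon R M Q"
    unfolding psi_q_def by (elim imageE)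
  have "ideal (colon R M Q) R"
    using graded_ideal_colon_qpSpec[OF Q(1)] by (rule graded_ideal_imp_ideal)
  moreover have "ann R M \<subseteq> colon R M Q"
    using ann_subset_colon graded_submodule_zero qpSpec_graded_submodule Q(1) by blast
  ultimately have "p = colon R M Q"
    using Ann.proj_image_inj[OF Spec_g_ideal[OF p(1)] p(2)] Q(2) by blast
  then have "rad_colon Q = p" using gr_radical_Spec_g[OF p(1)] by simp
  then show "p \<in> rad_colon ` qpSpec G R A M B" using Q(1) by blast
next
  fix p assume "p \<in> rad_colon ` qpSpec G R A M B"
  then show "p \<in> zero_locus (ann R M)" using rad_colon_qpSpec_zero_locus_ann by blast
qed

lemma phi_map_image:
  assumes "qpSpec_ring G (Rbar R M) (Abar R M A) \<subseteq> psi_q R M ` qpSpec G R A M B"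
  shows "phi_map G R A M B ` qpSpec G R A M B = Spec_g G (Rbar R M) (Abar R M A)"
proof -
  have "phi_map G R A M B ` qpSpec G R A M B = (\<lambda>Q. Ann.proj ` rad_colon Q) ` qpSpec G R A M B"
    by (rule image_cong[OF refl phi_map_eq])
  also have "\<dots> = (\<lambda>p. Ann.proj ` p) ` zero_locus (ann R M)"
    unfolding rad_colon_image_qpSpec[OF assms, symmetric] image_image ..
  also have "\<dots> = Spec_g G (Rbar R M) (Abar R M A)"
    unfolding Rbar_eq Abar_eq by (rule bij_betw_imp_surj_on[OF Ann.bij_betw_Spec_g_quot])
  finally show ?thesis .
qed

lemma inj_on_phi_map_iff:
  "inj_on (phi_map G R A M B) (qpSpec G R A M B) \<longleftrightarrow> inj_on rad_colon (qpSpec G R A M B)"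
proof -
  have "inj_on (phi_map G R A M B) (qpSpec G R A M B)
      \<longleftrightarrow> inj_on ((\<lambda>p. Ann.proj ` p) \<circ> rad_colon) (qpSpec G R A M B)"
    by (rule inj_on_cong) (simp add: phi_map_eq)
  moreover have "inj_on (\<lambda>p. Ann.proj ` p) (rad_colon ` qpSpec G R A M B)"
    using bij_betw_imp_inj_on[OF Ann.bij_betw_Spec_g_quot]
  proof (rule inj_on_subset)
    show "rad_colon ` qpSpec G R A M B \<subseteq> zero_locus (ann R M)"
      using rad_colon_qpSpec_zero_locus_ann by blast
  qed
  ultimately show ?thesis using comp_inj_on inj_on_imageI2 by blast
qed

lemma phi_map_Spec_g: "Q \<in> qpSpec G R A M B \<Longrightarrow> phi_map G R A M B Q \<in> Spec_g G (Rbar R M) (Abar R M A)"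
  unfolding phi_map_eq Rbar_eq Abar_eq
  using Ann.Spec_g_quot_image rad_colon_qpSpec_zero_locus_ann by simp

lemma phi_map_mem_zero_locus_iff:
  assumes Q: "Q \<in> qpSpec G R A M B" and Y: "Y \<subseteq> carrier (R Quot ann R M)"
  shows "phi_map G R A M B Q \<in> Ann.RQ.zero_locus Y \<longleftrightarrow> {x \<in> carrier R. Ann.proj x \<in> Y} \<subseteq> rad_colon Q"
proof -
  have p: "ideal (rad_colon Q) R" "ann R M \<subseteq> rad_colon Q"
    using rad_colon_qpSpec_zero_locus_ann[OF Q] Spec_g_ideal by auto
  have "Y \<subseteq> Ann.proj ` rad_colon Q \<longleftrightarrow> {x \<in> carrier R. Ann.proj x \<in> Y} \<subseteq> rad_colon Q"
  proof
    assume "Y \<subseteq> Ann.proj ` rad_colon Q"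
    then show "{x \<in> carrier R. Ann.proj x \<in> Y} \<subseteq> rad_colon Q"
      using Ann.proj_mem_image_iff[OF p] by blast
  next
    assume sub: "{x \<in> carrier R. Ann.proj x \<in> Y} \<subseteq> rad_colon Q"
    show "Y \<subseteq> Ann.proj ` rad_colon Q"
    proof
      fix y assume "y \<in> Y"
      moreover obtain x where "x \<in> carrier R" "y = Ann.proj x"
        using Y \<open>y \<in> Y\<close> unfolding Ann.carrier_quot by blast
      ultimately show "y \<in> Ann.proj ` rad_colon Q" using sub by blast
    qed
  qed
  then show ?thesis
    using phi_map_Spec_g[OF Q] unfolding phi_map_eq[OF Q] Rbar_eq Abar_eq by simp
qed

lemma qpSpec_closed_eq_phi_map_preimage:
  assumes J: "J \<subseteq> carrier R"
  shows "{Q \<in> qpSpec G R A M B. J \<subseteq> rad_colon Q}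
    = {Q \<in> qpSpec G R A M B. phi_map G R A M B Q \<in> Ann.RQ.zero_locus (Ann.proj ` J)}"
proof -
  have Y: "Ann.proj ` J \<subseteq> carrier (R Quot ann R M)" using J unfolding Ann.carrier_quot by blast
  have "J \<subseteq> rad_colon Q \<longleftrightarrow> {x \<in> carrier R. Ann.proj x \<in> Ann.proj ` J} \<subseteq> rad_colon Q"
    if Q: "Q \<in> qpSpec G R A M B" for Q
  proof
    assume JQ: "J \<subseteq> rad_colon Q"
    have p: "ideal (rad_colon Q) R" "ann R M \<subseteq> rad_colon Q"
      using rad_colon_qpSpec_zero_locus_ann[OF Q] Spec_g_ideal by auto
    show "{x \<in> carrier R. Ann.proj x \<in> Ann.proj ` J} \<subseteq> rad_colon Q"
    proof
      fix x assume "x \<in> {x \<in> carrier R. Ann.proj x \<in> Ann.proj ` J}"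
      then have "x \<in> carrier R" "Ann.proj x \<in> Ann.proj ` rad_colon Q" using JQ by blast+
      then show "x \<in> rad_colon Q" using Ann.proj_mem_image_iff[OF p] by blast
    qed
  qed (use J in blast)
  then show ?thesis using phi_map_mem_zero_locus_iff[OF _ Y] by blast
qed

lemma quasi_zariski_eq_pullback_topology:
  "quasi_zariski G R A M B
     = pullback_topology (qpSpec G R A M B) (phi_map G R A M B) (zariski_g G (Rbar R M) (Abar R M A))"
proof -
  let ?X = "qpSpec G R A M B" and ?phi = "phi_map G R A M B"
  let ?Spec = "Spec_g G (R Quot ann R M) Ann.quot_grading"
  let ?Z = "zariski_g G (R Quot ann R M) Ann.quot_grading"
  have "(\<exists>K. graded_submodule G R M B K \<and> U = ?X - qpV G R A M B K)
      \<longleftrightarrow> (\<exists>V. openin ?Z V \<and> U = ?phi -` V \<inter> ?X)" for U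
  proof
    assume "\<exists>K. graded_submodule G R M B K \<and> U = ?X - qpV G R A M B K"
    then obtain K where U: "U = ?X - qpV G R A M B K" by blast
    have J: "rad_colon K \<subseteq> carrier R" unfolding gr_radical_def by blast
    then have "U = ?phi -` (?Spec - Ann.RQ.zero_locus (Ann.proj ` rad_colon K)) \<inter> ?X"
      using U qpSpec_closed_eq_phi_map_preimage[OF J] phi_map_Spec_g
      unfolding qpV_def Rbar_eq Abar_eq by blast
    moreover have "openin ?Z (?Spec - Ann.RQ.zero_locus (Ann.proj ` rad_colon K))"
      unfolding Ann.RQ.openin_zariski_g using J unfolding Ann.carrier_quot by blast
    ultimately show "\<exists>V. openin ?Z V \<and> U = ?phi -` V \<inter> ?X" by blast
  next
    assume "\<exists>V. openin ?Z V \<and> U = ?phi -` V \<inter> ?X"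
    then obtain Y where Y: "Y \<subseteq> carrier (R Quot ann R M)"
      and U: "U = ?phi -` (?Spec - Ann.RQ.zero_locus Y) \<inter> ?X"
      unfolding Ann.RQ.openin_zariski_g by blast
    let ?J = "{x \<in> carrier R. Ann.proj x \<in> Y}"
    have "U = ?X - {Q \<in> ?X. ?J \<subseteq> rad_colon Q}"
      using U phi_map_mem_zero_locus_iff[OF _ Y] phi_map_Spec_g unfolding Rbar_eq Abar_eq by blast
    then have "U = ?X - qpV G R A M B (prime_submodule_meet ?J)"
      using qpV_prime_submodule_meet[of ?J] by simp
    then show "\<exists>K. graded_submodule G R M B K \<and> U = ?X - qpV G R A M B K"
      using graded_submodule_prime_submodule_meet by blast
  qed
  then have "(\<lambda>U. \<exists>K. graded_submodule G R M B K \<and> U = ?X - qpV G R A M B K)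
      = (\<lambda>U. \<exists>V. openin ?Z V \<and> U = ?phi -` V \<inter> ?X)"
    by (rule ext)
  then show ?thesis unfolding quasi_zariski_def pullback_topology_def Rbar_eq Abar_eq by simp
qed

lemma inj_on_rad_colon_iff_qpV:
  "inj_on rad_colon (qpSpec G R A M B) \<longleftrightarrow>
    (\<forall>P\<in>qpSpec G R A M B. \<forall>Q\<in>qpSpec G R A M B. qpV G R A M B P = qpV G R A M B Q \<longrightarrow> P = Q)"
proof -
  have "(\<forall>P\<in>qpSpec G R A M B. \<forall>Q\<in>qpSpec G R A M B. qpV G R A M B P = qpV G R A M B Q \<longrightarrow> P = Q)
      \<longleftrightarrow> (\<forall>P\<in>qpSpec G R A M B. \<forall>Q\<in>qpSpec G R A M B. rad_colon P = rad_colon Q \<longrightarrow> P = Q)"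
    using qpV_eq_iff by simp
  then show ?thesis unfolding inj_on_def by simp
qed

lemma inj_on_rad_colon_iff_card_qpSpec_at:
  "inj_on rad_colon (qpSpec G R A M B) \<longleftrightarrow>
    (\<forall>p\<in>Spec_g G R A. finite (qpSpec_at G R A M B p) \<and> card (qpSpec_at G R A M B p) \<le> 1)"
proof -
  have "rad_colon ` qpSpec G R A M B \<subseteq> Spec_g G R A" using rad_colon_qpSpec_Spec_g by blast
  then show ?thesis unfolding qpSpec_at_def by (rule inj_on_iff_card_fibres_le_one)
qed

end


theorem theorem4p15:
  fixes G :: "'g monoid" and R :: "'a ring" and A :: "'g \<Rightarrow> 'a set"
    and M :: "('a, 'b) module" and B :: "'g \<Rightarrow> 'b set"
  assumes grM: "graded_module G R A M B"
    and psi_surj: "qpSpec_ring G (Rbar R M) (Abar R M A) \<subseteq> psi_q R M ` qpSpec G R A M B"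
  defines "T \<equiv> quasi_zariski G R A M B"
  shows "(spectral_space T \<longleftrightarrow> t0_space T)
       \<and> (spectral_space T \<longleftrightarrow> inj_on (phi_map G R A M B) (qpSpec G R A M B))
       \<and> (spectral_space T \<longleftrightarrow> (\<forall>P\<in>qpSpec G R A M B. \<forall>Q\<in>qpSpec G R A M B.
              qpV G R A M B P = qpV G R A M B Q \<longrightarrow> P = Q))
       \<and> (spectral_space T \<longleftrightarrow> (\<forall>p\<in>Spec_g G R A.
              finite (qpSpec_at G R A M B p) \<and> card (qpSpec_at G R A M B p) \<le> 1))
       \<and> (spectral_space T \<longleftrightarrow>
              homeomorphic_map T (zariski_g G (Rbar R M) (Abar R M A)) (phi_map G R A M B))"
proof -
  have "graded_ring G R A" using grM unfolding graded_module_def by blast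
  then interpret graded_cring_module G R A M B
    by (intro graded_cring_module.intro graded_cring.intro graded_cring_module_axioms.intro grM)
  let ?X = "qpSpec G R A M B" and ?phi = "phi_map G R A M B"
  let ?Z = "zariski_g G (Rbar R M) (Abar R M A)"
  have T: "T = pullback_topology ?X ?phi ?Z"
    unfolding T_def by (rule quasi_zariski_eq_pullback_topology)
  have onto: "?phi ` ?X = topspace ?Z"
    using phi_map_image[OF psi_surj] Ann.RQ.topspace_zariski_g unfolding Rbar_eq Abar_eq by simp
  have Z: "spectral_space ?Z"
    using Ann.RQ.spectral_space_zariski_g unfolding Rbar_eq Abar_eq .
  then have "t0_space ?Z" unfolding spectral_space_def by blast
  then have "t0_space T \<longleftrightarrow> inj_on ?phi ?X"
    unfolding T by (rule t0_space_pullback_topology_iff[OF onto])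
  moreover have "spectral_space T \<longleftrightarrow> inj_on ?phi ?X"
    unfolding T by (rule spectral_space_pullback_topology_iff[OF onto Z])
  moreover have "homeomorphic_map T ?Z ?phi \<longleftrightarrow> inj_on ?phi ?X"
    unfolding T by (rule homeomorphic_map_pullback_topology_iff[OF onto])
  ultimately show ?thesis
    using inj_on_phi_map_iff inj_on_rad_colon_iff_qpV inj_on_rad_colon_iff_card_qpSpec_at by simp
qed

end
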